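(* Let $p$ be a solution of $\mathcal E^{\gamma,\delta}_{k,\ell}$ on an open connected set $O$, and suppose that either $k=1$ or $p_{u^{(k-1)}}p_{xu^{(k-2)}}-p_{u^{(k-2)}}p_{xu^{(k-1)}}$ vanishes identically. Then around each point where $p_{u^{(k-1)}}\ne0$ there exist a neighborhood and a function $\alpha$ of two variables such that $p_x=\alpha(x,p)$ identically on that neighborhood.
   Context: $k,\ell$ positive integers, $\widetilde\Omega\subset\mathbb{R}^4$ open connected, $\gamma,\delta:\widetilde\Omega\to\mathbb{R}$ real analytic with $\gamma_4$ nowhere zero (numeric subscripts = partial derivatives in that argument). The unknown $p$ is a function of $u,\dot u,\dots,u^{(k-1)},x,v,\dots,v^{(\ell-1)}$; $F=\sum_{i=0}^{k-2}u^{(i+1)}\partial_{u^{(i)}}+\sum_{i=0}^{\ell-2}v^{(i+1)}\partial_{v^{(i)}}$. A solution of $\mathcal E^{\gamma,\delta}_{k,\ell}$ is a real analytic $p$ with $(x,p,p_x,p_{xx})$ taking values in $\widetilde\Omega$ satisfying: (a) $p_{u^{(k-1)}}(Fp_x-\delta(x,p,p_x,p_{xx}))-p_{xu^{(k-1)}}(Fp-\gamma(x,p,p_x,p_{xx}))=0$; (b) $p_{u^{(k-1)}}p_{xv^{(\ell-1)}}-p_{xu^{(k-1)}}p_{v^{(\ell-1)}}=0$; (c) $p_{u^{(k-1)}}\ne0$; (d) $p_{v^{(\ell-1)}}\ne0$; (e) $\gamma_1+\gamma_2p_x+\gamma_3p_{xx}+\gamma_4p_{xxx}-\delta\ne0$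 (at $(x,p,p_x,p_{xx})$). *)

theory Defs
  imports "HOL-Analysis.Analysis"
begin

text \<open>Points of R^N are encoded as functions nat => real vanishing at indices >= N.
  The topology is the subspace topology of the product topology, i.e. the Euclidean one.\<close>
definition EucSp :: "nat \<Rightarrow> (nat \<Rightarrow> real) set" where
  "EucSp N = {z. \<forall>i\<ge>N. z i = 0}"

definition pd :: "nat \<Rightarrow> ((nat \<Rightarrow> real) \<Rightarrow> real) \<Rightarrow> (nat \<Rightarrow> real) \<Rightarrow> real" where
  "pd i f z = deriv (\<lambda>t. f (z(i := t))) (z i)"

text \<open>Real analyticity in N variables: locally the sum of an (absolutely, i.e. unconditionally)
  convergent power series on a polydisc.\<close>
definition real_analytic_on :: "nat \<Rightarrow> ((nat \<Rightarrow> real) \<Rightarrow> real) \<Rightarrow> (nat \<Rightarrow> real) set \<Rightarrow> bool" where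
  "real_analytic_on N f D \<longleftrightarrow>
     (\<forall>z\<in>D. \<exists>r>0. \<exists>c :: (nat \<Rightarrow> nat) \<Rightarrow> real.
        \<forall>w\<in>EucSp N. (\<forall>i<N. \<bar>w i - z i\<bar> < r) \<longrightarrow>
          ((\<lambda>a. c a * (\<Prod>i<N. (w i - z i) ^ a i)) has_sum f w) {a. \<forall>i\<ge>N. a i = 0})"

definition mk4 :: "real \<Rightarrow> real \<Rightarrow> real \<Rightarrow> real \<Rightarrow> (nat \<Rightarrow> real)" where
  "mk4 a b c d = (\<lambda>i. if i = 0 then a else if i = 1 then b else if i = 2 then c
                     else if i = 3 then d else 0)"

text \<open>Coordinates of R^(k+l+1): index i<k is u^(i), index k is x, index k+1+j is v^(j).
  The total derivative operator F.\<close>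
definition Fop :: "nat \<Rightarrow> nat \<Rightarrow> ((nat \<Rightarrow> real) \<Rightarrow> real) \<Rightarrow> (nat \<Rightarrow> real) \<Rightarrow> real" where
  "Fop k l f z = (\<Sum>i<k - 1. z (i + 1) * pd i f z) + (\<Sum>j<l - 1. z (k + 2 + j) * pd (k + 1 + j) f z)"

definition is_solution ::
  "nat \<Rightarrow> nat \<Rightarrow> ((nat \<Rightarrow> real) \<Rightarrow> real) \<Rightarrow> ((nat \<Rightarrow> real) \<Rightarrow> real) \<Rightarrow> (nat \<Rightarrow> real) set
   \<Rightarrow> ((nat \<Rightarrow> real) \<Rightarrow> real) \<Rightarrow> (nat \<Rightarrow> real) set \<Rightarrow> bool" where
  "is_solution k l \<gamma> \<delta> \<Omega> p D \<longleftrightarrow>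
     real_analytic_on (k + l + 1) p D \<and>
     (\<forall>z\<in>D.
        let w = mk4 (z k) (p z) (pd k p z) (pd k (pd k p) z) in
        w \<in> \<Omega> \<and>
        pd (k - 1) p z * (Fop k l (pd k p) z - \<delta> w)
          - pd (k - 1) (pd k p) z * (Fop k l p z - \<gamma> w) = 0 \<and>
        pd (k - 1) p z * pd (k + l) (pd k p) z - pd (k - 1) (pd k p) z * pd (k + l) p z = 0 \<and>
        pd (k - 1) p z \<noteq> 0 \<and>
        pd (k + l) p z \<noteq> 0 \<and>
        pd 0 \<gamma> w + pd 1 \<gamma> w * pd k p z + pd 2 \<gamma> w * pd k (pd k p) z
          + pd 3 \<gamma> w * pd k (pd k (pd k p)) z - \<delta> w \<noteq> 0)"

end

theory Submission
  imports Defs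
begin

text \<open>
  Near a point where \<open>p\<close> has nonzero derivative in \<open>u^(k-1)\<close>, this coordinate can be traded
  for the value \<open>c\<close> of \<open>p\<close> (a level chart); let \<open>Q\<close> be \<open>p_x\<close> written in the new coordinates.
  Equation (b) says that \<open>Q\<close> does not depend on \<open>v^(l-1)\<close>, and the extra hypothesis that it
  does not depend on \<open>u^(k-2)\<close>. Equation (a) turns into \<open>F Q = \<delta>(\<dots>) - Q_c \<gamma>(\<dots>)\<close>, whose
  right-hand side involves only \<open>x\<close>, \<open>c\<close>, \<open>Q\<close>, \<open>Q_x\<close> and \<open>Q_c\<close>. A coordinate \<open>u^(i)\<close> or
  \<open>v^(j)\<close> enters \<open>F Q\<close> only as the coefficient of the derivative of \<open>Q\<close> in the preceding
  coordinate, so independence of one coordinate forces independence of the preceding one.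
  Descending both chains, \<open>Q\<close> depends on \<open>x\<close> and \<open>c\<close> only, i.e. \<open>p_x = \<alpha>(x, p)\<close>.

  Real analyticity is used only through termwise differentiation of power series, which makes
  \<open>p\<close> and \<open>p_x\<close> differentiable in every pair of coordinates; the level chart is built with the
  intermediate value theorem and differentiated with the inverse function theorem in two
  variables.
\<close>

section \<open>Sums, derivatives and intervals\<close>

lemma has_sum_abs_le:
  fixes g G :: "'a \<Rightarrow> real"
  assumes "(g has_sum S) A" "(G has_sum T) A" "\<And>a. a \<in> A \<Longrightarrow> \<bar>g a\<bar> \<le> G a"
  shows "\<bar>S\<bar> \<le> T"
proof -
  have "S \<le> T"
    using assms(1,2) by (rule has_sum_mono) (use assms(3) abs_le_D1 in blast)
  moreover have "((\<lambda>a. - g a) has_sum (- S)) A"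
    using assms(1) by (rule has_sum_uminusI)
  then have "- S \<le> T"
    using assms(2) by (rule has_sum_mono) (use assms(3) abs_le_D2 in blast)
  ultimately show ?thesis
    by linarith
qed

lemma has_sum_diff:
  fixes f g :: "'a \<Rightarrow> 'b::topological_ab_group_add"
  assumes "(f has_sum a) A" "(g has_sum b) A"
  shows "((\<lambda>x. f x - g x) has_sum (a - b)) A"
  using has_sum_add[OF assms(1), of "\<lambda>x. - g x" "- b"] assms(2) by (simp add: has_sum_uminus)

lemma has_sum_has_real_derivative:
  fixes \<phi> :: "'a \<Rightarrow> real \<Rightarrow> real"
  assumes e: "0 < e"
    and \<Phi>: "\<And>x. \<bar>x - s\<bar> < e \<Longrightarrow> ((\<lambda>a. \<phi> a x) has_sum \<Phi> x) A"
    and D: "(\<phi>' has_sum D) A" and B: "(B has_sum \<beta>) A"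
    and bound: "\<And>a y. a \<in> A \<Longrightarrow> y \<noteq> 0 \<Longrightarrow> \<bar>y\<bar> < e \<Longrightarrow>
       \<bar>(\<phi> a (s + y) - \<phi> a s) / y - \<phi>' a\<bar> \<le> \<bar>y\<bar> * B a"
  shows "(\<Phi> has_real_derivative D) (at s)"
proof -
  have "((\<lambda>y. (\<Phi> (s + y) - \<Phi> s) / y - D) \<longlongrightarrow> 0) (at 0)"
  proof (rule Lim_null_comparison)
    have "eventually (\<lambda>y::real. y \<noteq> 0 \<and> \<bar>y\<bar> < e) (at 0)"
      using e unfolding eventually_at by (intro exI[of _ e]) auto
    then show "eventually (\<lambda>y. norm ((\<Phi> (s + y) - \<Phi> s) / y - D) \<le> \<bar>y\<bar> * \<beta>) (at 0)"
    proof (rule eventually_mono)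
      fix y :: real
      assume y: "y \<noteq> 0 \<and> \<bar>y\<bar> < e"
      have "((\<lambda>a. (\<phi> a (s + y) - \<phi> a s) / y - \<phi>' a) has_sum ((\<Phi> (s + y) - \<Phi> s) / y - D)) A"
        using y e by (intro has_sum_diff[OF has_sum_divide_const[OF has_sum_diff] D] \<Phi>) auto
      moreover have "((\<lambda>a. \<bar>y\<bar> * B a) has_sum (\<bar>y\<bar> * \<beta>)) A"
        by (rule has_sum_cmult_right[OF B])
      ultimately have "\<bar>(\<Phi> (s + y) - \<Phi> s) / y - D\<bar> \<le> \<bar>y\<bar> * \<beta>"
        by (rule has_sum_abs_le) (use bound y in blast)
      then show "norm ((\<Phi> (s + y) - \<Phi> s) / y - D) \<le> \<bar>y\<bar> * \<beta>"
        by simp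
    qed
    show "((\<lambda>y. \<bar>y\<bar> * \<beta>) \<longlongrightarrow> 0) (at 0)"
      by (auto intro!: tendsto_eq_intros)
  qed
  then show ?thesis
    unfolding DERIV_def by (simp add: LIM_zero_iff)
qed

lemma has_derivative_of_quadratic_bound:
  fixes F :: "'a::real_normed_vector \<Rightarrow> 'b::real_normed_vector"
  assumes L: "bounded_linear L" and e: "0 < e"
    and bound: "\<And>y. norm (y - x) < e \<Longrightarrow> norm (F y - F x - L (y - x)) \<le> C * (norm (y - x))\<^sup>2"
  shows "(F has_derivative L) (at x)"
  unfolding has_derivative_at_alt
proof (intro conjI L allI impI)
  fix \<epsilon> :: real
  assume \<epsilon>: "0 < \<epsilon>"
  define d where "d = min e (\<epsilon> / (\<bar>C\<bar> + 1))"
  have d: "0 < d" "d \<le> e" "\<bar>C\<bar> * d \<le> \<epsilon>"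
    unfolding d_def using e \<epsilon> by (auto simp: min_def field_simps)
  show "\<exists>d>0. \<forall>y. norm (y - x) < d \<longrightarrow> norm (F y - F x - L (y - x)) \<le> \<epsilon> * norm (y - x)"
  proof (intro exI[of _ d] conjI d(1) allI impI)
    fix y
    assume y: "norm (y - x) < d"
    have "norm (F y - F x - L (y - x)) \<le> C * (norm (y - x))\<^sup>2"
      using bound y d(2) by simp
    also have "\<dots> \<le> (\<bar>C\<bar> * d) * norm (y - x)"
    proof -
      have "C * norm (y - x) \<le> \<bar>C\<bar> * norm (y - x)"
        by (rule mult_right_mono) simp_all
      also have "\<dots> \<le> \<bar>C\<bar> * d"
        using y by (intro mult_left_mono) simp_all
      finally have "C * norm (y - x) \<le> \<bar>C\<bar> * d" .
      then show ?thesis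
        by (simp add: power2_eq_square mult.assoc[symmetric] mult_right_mono)
    qed
    also have "\<dots> \<le> \<epsilon> * norm (y - x)"
      using d(3) by (simp add: mult_right_mono)
    finally show "norm (F y - F x - L (y - x)) \<le> \<epsilon> * norm (y - x)" .
  qed
qed

lemma has_derivative_pair_partials:
  assumes "(F has_derivative (\<lambda>h. A * fst h + B * snd h)) (at (a, b))"
  shows "((\<lambda>t. F (t, b)) has_real_derivative A) (at a)"
    and "((\<lambda>t. F (a, t)) has_real_derivative B) (at b)"
proof -
  have "((F \<circ> (\<lambda>t. (t, b))) has_derivative ((\<lambda>h. A * fst h + B * snd h) \<circ> (\<lambda>h. (h, 0)))) (at a)"
    by (rule diff_chain_at) (use assms in \<open>auto intro!: derivative_eq_intros\<close>)
  moreover have "(\<lambda>h. A * fst h + B * snd h) \<circ> (\<lambda>h. (h, 0)) = (*) A"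
    by (auto simp: fun_eq_iff)
  ultimately show "((\<lambda>t. F (t, b)) has_real_derivative A) (at a)"
    unfolding has_field_derivative_def by (simp add: comp_def)
  have "((F \<circ> (\<lambda>t. (a, t))) has_derivative ((\<lambda>h. A * fst h + B * snd h) \<circ> (\<lambda>h. (0, h)))) (at b)"
    by (rule diff_chain_at) (use assms in \<open>auto intro!: derivative_eq_intros\<close>)
  moreover have "(\<lambda>h. A * fst h + B * snd h) \<circ> (\<lambda>h. (0, h)) = (*) B"
    by (auto simp: fun_eq_iff)
  ultimately show "((\<lambda>t. F (a, t)) has_real_derivative B) (at b)"
    unfolding has_field_derivative_def by (simp add: comp_def)
qed

text \<open>The map \<open>(s, t) \<mapsto> (s, F (s, t))\<close> is inverted near \<open>(s0, t0)\<close> by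
  \<open>(s, c) \<mapsto> (s, \<phi> s c)\<close>, so the inverse function theorem differentiates \<open>\<phi>\<close>.\<close>
lemma has_derivative_compose_implicit:
  fixes F G :: "real \<times> real \<Rightarrow> real" and \<phi> :: "real \<Rightarrow> real \<Rightarrow> real"
  assumes S: "open S" and x0: "(s0, t0) \<in> S"
    and dF: "\<And>s t. (s, t) \<in> S \<Longrightarrow> (F has_derivative (\<lambda>h. Fs s t * fst h + Ft s t * snd h)) (at (s, t))"
    and dG: "(G has_derivative (\<lambda>h. Gs * fst h + Gt * snd h)) (at (s0, t0))"
    and nz: "Ft s0 t0 \<noteq> 0"
    and inv: "\<And>s t. (s, t) \<in> S \<Longrightarrow> \<phi> s (F (s, t)) = t"
  shows "((\<lambda>y. G (fst y, \<phi> (fst y) (snd y))) has_derivative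
           (\<lambda>h. (Gs - Gt * Fs s0 t0 / Ft s0 t0) * fst h + (Gt / Ft s0 t0) * snd h)) (at (s0, F (s0, t0)))"
proof -
  define \<Phi> where "\<Phi> = (\<lambda>x::real \<times> real. (fst x, F x))"
  define \<Psi> where "\<Psi> = (\<lambda>y::real \<times> real. (fst y, \<phi> (fst y) (snd y)))"
  define \<Phi>' where "\<Phi>' = (\<lambda>h::real \<times> real. (fst h, Fs s0 t0 * fst h + Ft s0 t0 * snd h))"
  define \<Psi>' where "\<Psi>' = (\<lambda>h::real \<times> real. (fst h, (snd h - Fs s0 t0 * fst h) / Ft s0 t0))"
  have "continuous_on S F"
    using dF has_derivative_continuous by (fastforce intro!: continuous_at_imp_continuous_on)
  then have "continuous_on S \<Phi>"
    unfolding \<Phi>_def by (intro continuous_on_Pair continuous_on_fst continuous_on_id)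
  moreover have "\<Psi> (\<Phi> x) = x" if "x \<in> S" for x
    using inv[of "fst x" "snd x"] that unfolding \<Psi>_def \<Phi>_def by simp
  moreover have "(\<Phi> has_derivative \<Phi>') (at (s0, t0))"
    unfolding \<Phi>_def \<Phi>'_def by (intro has_derivative_Pair has_derivative_fst[OF has_derivative_ident] dF[OF x0])
  moreover have "\<Phi>' \<circ> \<Psi>' = id"
    unfolding \<Phi>'_def \<Psi>'_def using nz by (auto simp: fun_eq_iff field_simps)
  ultimately have "(\<Psi> has_derivative \<Psi>') (at (\<Phi> (s0, t0)))"
    by (rule has_derivative_inverse_strong[OF S x0])
  moreover have "\<Psi> (\<Phi> (s0, t0)) = (s0, t0)"
    using inv[OF x0] unfolding \<Psi>_def \<Phi>_def by simp
  ultimately have "((G \<circ> \<Psi>) has_derivative ((\<lambda>h. Gs * fst h + Gt * snd h) \<circ> \<Psi>')) (at (\<Phi> (s0, t0)))"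
    using dG by (intro diff_chain_at) simp_all
  moreover have "(\<lambda>h. Gs * fst h + Gt * snd h) \<circ> \<Psi>' =
      (\<lambda>h. (Gs - Gt * Fs s0 t0 / Ft s0 t0) * fst h + (Gt / Ft s0 t0) * snd h)"
    unfolding \<Psi>'_def using nz by (auto simp: fun_eq_iff field_simps)
  ultimately show ?thesis
    by (simp add: \<Phi>_def \<Psi>_def comp_def)
qed

lemma abs_power_deriv_le:
  assumes \<rho>: "0 < \<rho>" and s: "\<bar>s\<bar> \<le> \<rho> / 4"
  shows "\<bar>real n * s ^ (n - 1)\<bar> \<le> 4 / \<rho> * \<rho> ^ n"
proof (cases n)
  case 0
  then show ?thesis using \<rho> by simp
next
  case (Suc m)
  have "Suc m < 2 ^ Suc m"
    by (rule less_exp)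
  also have "(2::nat) ^ Suc m \<le> 4 ^ Suc m"
    by (intro power_mono) auto
  finally have "real (Suc m) \<le> 4 * 4 ^ m"
    by (metis less_imp_le of_nat_le_iff of_nat_mult of_nat_numeral of_nat_power power_Suc)
  moreover have "\<bar>s\<bar> ^ m \<le> (\<rho> / 4) ^ m"
    using s by (simp add: power_mono)
  ultimately have "real (Suc m) * \<bar>s\<bar> ^ m \<le> (4 * 4 ^ m) * (\<rho> / 4) ^ m"
    by (intro mult_mono) auto
  then show ?thesis
    using Suc \<rho> by (simp add: abs_mult power_abs power_divide)
qed

lemma abs_power_diff_quotient_le:
  assumes \<rho>: "0 < \<rho>" and s: "\<bar>s\<bar> \<le> \<rho> / 4" "\<bar>s + y\<bar> \<le> \<rho> / 4" and y: "y \<noteq> 0"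
  shows "\<bar>((s + y) ^ n - s ^ n) / y - real n * s ^ (n - 1)\<bar> \<le> \<bar>y\<bar> * (16 / \<rho>\<^sup>2 * \<rho> ^ n)"
proof -
  have "real n * real (n - 1) * (\<rho> / 4) ^ (n - 2) \<le> 16 / \<rho>\<^sup>2 * \<rho> ^ n"
  proof (cases "n < 2")
    case True
    then have "n = 0 \<or> n = 1" by auto
    then show ?thesis using \<rho> by auto
  next
    case False
    then obtain m where m: "n = Suc (Suc m)"
      by (metis add_2_eq_Suc le_Suc_ex not_less)
    have "Suc (Suc m) < 2 ^ Suc (Suc m)"
      by (rule less_exp)
    then have "Suc (Suc m) * Suc m \<le> 2 ^ Suc (Suc m) * 2 ^ Suc (Suc m)"
      by (intro mult_le_mono) auto
    also have "\<dots> = 16 * 4 ^ m"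
      by (simp add: power_mult_distrib[symmetric])
    finally have "real (Suc (Suc m)) * real (Suc m) \<le> 16 * 4 ^ m"
      by (metis of_nat_le_iff of_nat_mult of_nat_numeral of_nat_power)
    then have "real (Suc (Suc m)) * real (Suc m) * (\<rho> ^ m / 4 ^ m) \<le> (16 * 4 ^ m) * (\<rho> ^ m / 4 ^ m)"
      using \<rho> by (intro mult_right_mono) auto
    then show ?thesis
      using m \<rho> by (simp add: power_divide power2_eq_square)
  qed
  moreover have "\<bar>((s + y) ^ n - s ^ n) / y - real n * s ^ (n - 1)\<bar>
      \<le> real n * real (n - 1) * (\<rho> / 4) ^ (n - 2) * \<bar>y\<bar>"
    using lemma_termdiff3[OF y, of s "\<rho> / 4" n] s by simp
  ultimately show ?thesis
    by (smt (verit) abs_ge_zero mult.commute mult_right_mono)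
qed

lemma inj_on_interval_if_deriv_nonzero:
  fixes f :: "real \<Rightarrow> real"
  assumes deriv: "\<And>t. t \<in> {a..b} \<Longrightarrow> (f has_real_derivative f' t) (at t)"
    and nz: "\<And>t. t \<in> {a..b} \<Longrightarrow> f' t \<noteq> 0"
  shows "inj_on f {a..b}"
proof -
  have "f lo \<noteq> f hi" if "a \<le> lo" "lo < hi" "hi \<le> b" for lo hi
  proof
    assume "f lo = f hi"
    moreover have "continuous_on {lo..hi} f"
    proof (intro continuous_at_imp_continuous_on ballI)
      fix x
      assume "x \<in> {lo..hi}"
      with that have "x \<in> {a..b}"
        by auto
      then show "isCont f x"
        by (rule DERIV_isCont[OF deriv])
    qed
    moreover have "f differentiable (at x)" if "lo < x" "x < hi" for x
    proof -
      have "x \<in> {a..b}"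
        using \<open>a \<le> lo\<close> \<open>hi \<le> b\<close> that by auto
      then show ?thesis
        using deriv unfolding real_differentiable_def by blast
    qed
    ultimately obtain \<xi> where "lo < \<xi>" "\<xi> < hi" "(f has_real_derivative 0) (at \<xi>)"
      using Rolle[OF \<open>lo < hi\<close>] by blast
    with that deriv nz show False
      by (metis DERIV_unique atLeastAtMost_iff less_imp_le order.trans)
  qed
  then show ?thesis
    by (intro inj_onI) (metis atLeastAtMost_iff linorder_neqE_linordered_idom)
qed

lemma IVT_open_interval:
  fixes f :: "real \<Rightarrow> real"
  assumes "continuous_on {a..b} f" "a \<le> b" and "(f a < c \<and> c < f b) \<or> (f b < c \<and> c < f a)"
  shows "c \<in> f ` {a<..<b}"
proof -
  obtain t where "a \<le> t" "t \<le> b" "f t = c"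
    using assms IVT'[of f a c b] IVT2'[of f b c a] by force
  moreover from this have "t \<noteq> a" "t \<noteq> b"
    using assms(3) by auto
  ultimately show ?thesis
    by force
qed

section \<open>Power series in finitely many variables\<close>

definition mindices :: "nat \<Rightarrow> (nat \<Rightarrow> nat) set" where
  "mindices N = {a. \<forall>i\<ge>N. a i = 0}"

definition pmonom :: "nat \<Rightarrow> (nat \<Rightarrow> real) \<Rightarrow> (nat \<Rightarrow> nat) \<Rightarrow> real" where
  "pmonom N h a = (\<Prod>i<N. h i ^ a i)"

definition mdeg :: "nat \<Rightarrow> (nat \<Rightarrow> nat) \<Rightarrow> nat" where
  "mdeg N a = (\<Sum>i<N. a i)"

definition unit_mindex :: "nat \<Rightarrow> nat \<Rightarrow> nat" where
  "unit_mindex m = (\<lambda>j. if j = m then 1 else 0)"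

definition has_pseries ::
  "nat \<Rightarrow> ((nat \<Rightarrow> real) \<Rightarrow> real) \<Rightarrow> (nat \<Rightarrow> real) \<Rightarrow> real \<Rightarrow> ((nat \<Rightarrow> nat) \<Rightarrow> real) \<Rightarrow> bool" where
  "has_pseries N f z r c \<longleftrightarrow> 0 < r \<and> (\<forall>w\<in>EucSp N. (\<forall>i<N. \<bar>w i - z i\<bar> < r) \<longrightarrow>
      ((\<lambda>a. c a * pmonom N (\<lambda>i. w i - z i) a) has_sum f w) (mindices N))"

lemma has_pseriesD:
  "has_pseries N f z r c \<Longrightarrow> w \<in> EucSp N \<Longrightarrow> \<forall>i<N. \<bar>w i - z i\<bar> < r \<Longrightarrow>
    ((\<lambda>a. c a * pmonom N (\<lambda>i. w i - z i) a) has_sum f w) (mindices N)"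
  by (simp add: has_pseries_def)

lemma real_analytic_on_iff_has_pseries:
  "real_analytic_on N f D \<longleftrightarrow> (\<forall>z\<in>D. \<exists>r c. has_pseries N f z r c)"
  unfolding real_analytic_on_def has_pseries_def pmonom_def mindices_def by meson

lemma pmonom_zero_index: "pmonom N h (\<lambda>_. 0) = 1"
  by (simp add: pmonom_def)

lemma pmonom_unit_mindex: "m < N \<Longrightarrow> pmonom N h (unit_mindex m) = h m"
  unfolding pmonom_def unit_mindex_def by (simp add: if_distrib[of "power _"] prod.delta cong: if_cong)

lemma pmonom_const: "pmonom N (\<lambda>_. \<rho>) a = \<rho> ^ mdeg N a"
  by (simp add: pmonom_def mdeg_def power_sum)

lemma pmonom_split: "k < N \<Longrightarrow> pmonom N h a = h k ^ a k * pmonom N h (a(k := 0))"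
  unfolding pmonom_def by (simp add: prod.remove[of "{..<N}" k])

lemma mdeg_split: "k < N \<Longrightarrow> mdeg N a = a k + mdeg N (a(k := 0))"
  unfolding mdeg_def by (simp add: sum.remove[of "{..<N}" k])

lemma abs_pmonom_le:
  assumes "\<forall>i<N. \<bar>h i\<bar> \<le> \<delta>"
  shows "\<bar>pmonom N h a\<bar> \<le> \<delta> ^ mdeg N a"
proof -
  have "\<bar>pmonom N h a\<bar> = (\<Prod>i<N. \<bar>h i\<bar> ^ a i)"
    unfolding pmonom_def by (simp add: abs_prod power_abs)
  also have "\<dots> \<le> (\<Prod>i<N. \<delta> ^ a i)"
    by (rule prod_mono) (use assms in \<open>auto intro: power_mono\<close>)
  finally show ?thesis
    by (simp add: mdeg_def power_sum)
qed

lemma mindices_mdeg_le_1: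
  assumes "a \<in> mindices N" "mdeg N a \<le> 1"
  shows "a = (\<lambda>_. 0) \<or> (\<exists>i<N. a = unit_mindex i)"
proof (cases "\<exists>i<N. a i \<noteq> 0")
  case False
  with assms(1) show ?thesis
    unfolding mindices_def by (auto simp: fun_eq_iff) (meson not_le)
next
  case True
  then obtain i where i: "i < N" "a i \<noteq> 0" by blast
  have "a i + (\<Sum>j\<in>{..<N} - {i}. a j) \<le> 1"
    using assms(2) i(1) by (simp add: mdeg_def sum.remove)
  then have "a i = 1" "sum a ({..<N} - {i}) = 0"
    using i(2) by linarith+
  then have "a i = 1" "\<forall>j\<in>{..<N} - {i}. a j = 0"
    by simp_all
  have "a = unit_mindex i"
  proof
    fix j
    show "a j = unit_mindex i j"
      using assms(1) \<open>a i = 1\<close> \<open>\<forall>j\<in>{..<N} - {i}. a j = 0\<close>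
      unfolding mindices_def unit_mindex_def by (cases "j < N") auto
  qed
  with i(1) show ?thesis by blast
qed

definition pseries_majorant :: "nat \<Rightarrow> ((nat \<Rightarrow> nat) \<Rightarrow> real) \<Rightarrow> real \<Rightarrow> real" where
  "pseries_majorant N c \<rho> = infsum (\<lambda>a. \<bar>c a\<bar> * \<rho> ^ mdeg N a) (mindices N)"

lemma pseries_majorant_nonneg: "0 \<le> \<rho> \<Longrightarrow> 0 \<le> pseries_majorant N c \<rho>"
  unfolding pseries_majorant_def by (intro infsum_nonneg) simp

lemma has_pseries_majorant:
  assumes f: "has_pseries N f z r c" and z: "z \<in> EucSp N" and \<rho>: "0 < \<rho>" "\<rho> < r"
  shows "((\<lambda>a. \<bar>c a\<bar> * \<rho> ^ mdeg N a) has_sum pseries_majorant N c \<rho>) (mindices N)"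
proof -
  define w where "w = (\<lambda>i. if i < N then z i + \<rho> else 0)"
  have "w \<in> EucSp N" "\<forall>i<N. \<bar>w i - z i\<bar> < r"
    using \<rho> unfolding w_def EucSp_def by auto
  then have "((\<lambda>a. c a * pmonom N (\<lambda>i. w i - z i) a) has_sum f w) (mindices N)"
    by (rule has_pseriesD[OF f])
  moreover have "pmonom N (\<lambda>i. w i - z i) a = \<rho> ^ mdeg N a" for a
    unfolding pmonom_const[symmetric] pmonom_def w_def by simp
  ultimately have "(\<lambda>a. c a * \<rho> ^ mdeg N a) summable_on mindices N"
    by (auto dest: has_sum_imp_summable)
  then have "(\<lambda>a. norm (c a * \<rho> ^ mdeg N a)) summable_on mindices N"
    by (rule summable_on_iff_abs_summable_on_real[THEN iffD1])
  then show ?thesis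
    using \<rho> unfolding pseries_majorant_def by (simp add: abs_mult summable_iff_has_sum_infsum)
qed

lemma pseries_tail_le:
  assumes S: "((\<lambda>a. c a * pmonom N h a) has_sum S) A" and A: "A \<subseteq> mindices N"
    and M: "((\<lambda>a. \<bar>c a\<bar> * \<rho> ^ mdeg N a) has_sum M) (mindices N)"
    and \<rho>: "0 < \<rho>" and \<delta>: "0 \<le> \<delta>" "\<delta> \<le> \<rho>"
    and h: "\<forall>i<N. \<bar>h i\<bar> \<le> \<delta>" and d: "\<forall>a\<in>A. d \<le> mdeg N a"
  shows "\<bar>S\<bar> \<le> (\<delta>/\<rho>) ^ d * M"
proof -
  define G where "G a = (\<delta>/\<rho>) ^ d * (\<bar>c a\<bar> * \<rho> ^ mdeg N a)" for a
  have G0: "0 \<le> G a" for a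
    using \<rho> \<delta> unfolding G_def by simp
  have pointwise: "\<bar>c a * pmonom N h a\<bar> \<le> G a" if "a \<in> A" for a
  proof -
    have "\<bar>pmonom N h a\<bar> \<le> (\<delta>/\<rho>) ^ mdeg N a * \<rho> ^ mdeg N a"
      using abs_pmonom_le[OF h, of a] \<rho> by (simp add: power_divide)
    also have "\<dots> \<le> (\<delta>/\<rho>) ^ d * \<rho> ^ mdeg N a"
      using \<rho> \<delta> d that by (intro mult_right_mono power_decreasing) auto
    finally have "\<bar>c a\<bar> * \<bar>pmonom N h a\<bar> \<le> \<bar>c a\<bar> * ((\<delta>/\<rho>) ^ d * \<rho> ^ mdeg N a)"
      by (rule mult_left_mono) simp
    then show ?thesis
      unfolding G_def by (simp add: abs_mult ac_simps)
  qed
  have GM: "(G has_sum ((\<delta>/\<rho>) ^ d * M)) (mindices N)"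
    unfolding G_def by (rule has_sum_cmult_right[OF M])
  then have "G summable_on A"
    using summable_on_subset[OF has_sum_imp_summable A] by blast
  then have GA: "(G has_sum infsum G A) A"
    by (simp add: summable_iff_has_sum_infsum)
  have "\<bar>S\<bar> \<le> infsum G A"
    by (rule has_sum_abs_le[OF S GA pointwise])
  also have "\<dots> \<le> (\<delta>/\<rho>) ^ d * M"
    using has_sum_mono'[OF GA GM A] G0 by blast
  finally show ?thesis .
qed

lemma mdeg_unit_mindex: "i < N \<Longrightarrow> mdeg N (unit_mindex i) = 1"
  unfolding mdeg_def unit_mindex_def by (simp add: sum.delta)

lemma has_pseries_at_center:
  assumes f: "has_pseries N f z r c" and z: "z \<in> EucSp N"
  shows "f z = c (\<lambda>_. 0)"
proof -
  have "0 < r"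
    using f by (simp add: has_pseries_def)
  then have hs: "((\<lambda>a. c a * pmonom N (\<lambda>_. 0) a) has_sum f z) (mindices N)"
    using has_pseriesD[OF f z] by simp
  have "pmonom N (\<lambda>_. 0) a = 0" if a: "a \<in> mindices N" "a \<noteq> (\<lambda>_. 0)" for a
  proof -
    obtain i where "a i \<noteq> 0"
      using a(2) by (auto simp: fun_eq_iff)
    moreover from this have "i < N"
      using a(1) unfolding mindices_def by (cases "i < N") auto
    ultimately show ?thesis
      unfolding pmonom_def by (intro prod_zero) auto
  qed
  then have "((\<lambda>a. c a * pmonom N (\<lambda>_. 0) a) has_sum f z) {\<lambda>_. 0}"
    using hs by (subst has_sum_cong_neutral[where T = "mindices N"]) (auto simp: mindices_def)
  then show ?thesis
    by (simp add: has_sum_finite_iff pmonom_zero_index)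
qed

lemma pseries_truncation_le:
  assumes f: "has_pseries N f z r c" and z: "z \<in> EucSp N" and \<rho>: "0 < \<rho>" "\<rho> < r"
    and w: "w \<in> EucSp N" "\<forall>i<N. \<bar>w i - z i\<bar> \<le> \<delta>" and \<delta>: "0 \<le> \<delta>" "\<delta> \<le> \<rho>"
    and F: "finite F" "F \<subseteq> mindices N" "\<forall>a\<in>mindices N - F. d \<le> mdeg N a"
  shows "\<bar>f w - (\<Sum>a\<in>F. c a * pmonom N (\<lambda>i. w i - z i) a)\<bar> \<le> (\<delta>/\<rho>) ^ d * pseries_majorant N c \<rho>"
proof (rule pseries_tail_le)
  have "\<forall>i<N. \<bar>w i - z i\<bar> < r"
    using w(2) \<delta> \<rho> by fastforce
  then have "((\<lambda>a. c a * pmonom N (\<lambda>i. w i - z i) a) has_sum f w) (mindices N)"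
    by (rule has_pseriesD[OF f w(1)])
  then show "((\<lambda>a. c a * pmonom N (\<lambda>i. w i - z i) a) has_sum
      (f w - (\<Sum>a\<in>F. c a * pmonom N (\<lambda>i. w i - z i) a))) (mindices N - F)"
    by (rule has_sum_Diff[OF _ has_sum_finiteI[OF F(1) refl] F(2)])
  show "((\<lambda>a. \<bar>c a\<bar> * \<rho> ^ mdeg N a) has_sum pseries_majorant N c \<rho>) (mindices N)"
    by (rule has_pseries_majorant[OF f z \<rho>])
qed (use \<rho> \<delta> w F in auto)

lemma pseries_remainder_0_le:
  assumes f: "has_pseries N f z r c" and z: "z \<in> EucSp N" and \<rho>: "0 < \<rho>" "\<rho> < r"
    and w: "w \<in> EucSp N" "\<forall>i<N. \<bar>w i - z i\<bar> \<le> \<delta>" and \<delta>: "0 \<le> \<delta>" "\<delta> \<le> \<rho>"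
  shows "\<bar>f w - f z\<bar> \<le> \<delta>/\<rho> * pseries_majorant N c \<rho>"
proof -
  have "1 \<le> mdeg N a" if "a \<in> mindices N - {\<lambda>_. 0}" for a
  proof (rule ccontr)
    assume "\<not> 1 \<le> mdeg N a"
    with that have "\<exists>i<N. a = unit_mindex i"
      using mindices_mdeg_le_1[of a N] by auto
    with \<open>\<not> 1 \<le> mdeg N a\<close> show False
      using mdeg_unit_mindex by auto
  qed
  then show ?thesis
    using pseries_truncation_le[OF f z \<rho> w \<delta>, of "{\<lambda>_. 0}" 1] has_pseries_at_center[OF f z]
    by (simp add: mindices_def pmonom_zero_index)
qed

lemma pseries_remainder_1_le:
  assumes f: "has_pseries N f z r c" and z: "z \<in> EucSp N" and \<rho>: "0 < \<rho>" "\<rho> < r"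
    and w: "w \<in> EucSp N" "\<forall>i<N. \<bar>w i - z i\<bar> \<le> \<delta>" and \<delta>: "0 \<le> \<delta>" "\<delta> \<le> \<rho>"
  shows "\<bar>f w - f z - (\<Sum>i<N. c (unit_mindex i) * (w i - z i))\<bar> \<le> (\<delta>/\<rho>)^2 * pseries_majorant N c \<rho>"
proof -
  define F where "F = insert (\<lambda>_. 0) (unit_mindex ` {..<N})"
  have inj: "inj_on unit_mindex {..<N}"
  proof (rule inj_onI)
    fix i j
    assume "unit_mindex i = unit_mindex j"
    then have "unit_mindex i i = unit_mindex j i"
      by simp
    then show "i = j"
      by (simp add: unit_mindex_def split: if_splits)
  qed
  have "(\<lambda>_. 0) \<notin> unit_mindex ` {..<N}"
  proof
    assume "(\<lambda>_. 0) \<in> unit_mindex ` {..<N}"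
    then obtain i where "i < N" "(\<lambda>_. 0) = unit_mindex i"
      by auto
    then have "mdeg N (\<lambda>_. 0) = 1"
      using mdeg_unit_mindex by simp
    then show False
      by (simp add: mdeg_def)
  qed
  then have "(\<Sum>a\<in>F. c a * pmonom N (\<lambda>i. w i - z i) a) = f z + (\<Sum>i<N. c (unit_mindex i) * (w i - z i))"
    unfolding F_def using has_pseries_at_center[OF f z]
    by (simp add: sum.reindex[OF inj] pmonom_zero_index pmonom_unit_mindex)
  moreover have "F \<subseteq> mindices N"
    unfolding F_def mindices_def unit_mindex_def by auto
  moreover have "2 \<le> mdeg N a" if "a \<in> mindices N - F" for a
  proof (rule ccontr)
    assume "\<not> 2 \<le> mdeg N a"
    with that have "a = (\<lambda>_. 0) \<or> (\<exists>i<N. a = unit_mindex i)"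
      by (intro mindices_mdeg_le_1) auto
    with that show False
      unfolding F_def by auto
  qed
  ultimately show ?thesis
    using pseries_truncation_le[OF f z \<rho> w \<delta>, of F 2] unfolding F_def by simp
qed

lemma has_pseries_continuous_box:
  assumes f: "has_pseries N f z r c" and z: "z \<in> EucSp N" and e: "0 < e"
  shows "\<exists>d>0. \<forall>w\<in>EucSp N. (\<forall>i<N. \<bar>w i - z i\<bar> < d) \<longrightarrow> \<bar>f w - f z\<bar> < e"
proof -
  define \<rho> where "\<rho> = r / 2"
  have \<rho>: "0 < \<rho>" "\<rho> < r"
    using f unfolding has_pseries_def \<rho>_def by auto
  define M where "M = pseries_majorant N c \<rho>"
  have M: "0 \<le> M"
    unfolding M_def using \<rho> by (simp add: pseries_majorant_nonneg)
  define d where "d = min \<rho> (e * \<rho> / (M + 1))"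
  have d: "0 < d" "d \<le> \<rho>"
    unfolding d_def using \<rho> e M by auto
  have "d \<le> e * \<rho> / (M + 1)"
    unfolding d_def by simp
  then have d_over_\<rho>: "d / \<rho> \<le> e / (M + 1)"
    using \<rho> M by (simp add: field_simps)
  show ?thesis
  proof (intro exI[of _ d] conjI ballI impI d(1))
    fix w
    assume w: "w \<in> EucSp N" "\<forall>i<N. \<bar>w i - z i\<bar> < d"
    have "\<bar>f w - f z\<bar> \<le> d / \<rho> * M"
      unfolding M_def using w d by (intro pseries_remainder_0_le[OF f z \<rho> w(1)]) auto
    also have "\<dots> \<le> e / (M + 1) * M"
      using d_over_\<rho> M by (rule mult_right_mono)
    also have "\<dots> < e"
      using e M by (simp add: field_simps)
    finally show "\<bar>f w - f z\<bar> < e" .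
  qed
qed

lemma has_pseries_has_derivative_pair:
  assumes f: "has_pseries N f z r c" and z: "z \<in> EucSp N" and mu: "m < N" "u < N" "m \<noteq> u"
  shows "((\<lambda>x. f (z(m := fst x, u := snd x))) has_derivative
           (\<lambda>h. c (unit_mindex m) * fst h + c (unit_mindex u) * snd h)) (at (z m, z u))"
proof (rule has_derivative_of_quadratic_bound)
  define \<rho> where "\<rho> = r / 2"
  have \<rho>: "0 < \<rho>" "\<rho> < r"
    using f unfolding has_pseries_def \<rho>_def by auto
  then show "0 < \<rho>" by simp
  show "bounded_linear (\<lambda>h::real \<times> real. c (unit_mindex m) * fst h + c (unit_mindex u) * snd h)"
    by (intro bounded_linear_add bounded_linear_mult_right[THEN bounded_linear_compose]
        bounded_linear_fst bounded_linear_snd)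
  fix y :: "real \<times> real"
  assume y: "norm (y - (z m, z u)) < \<rho>"
  define \<delta> where "\<delta> = norm (y - (z m, z u))"
  define w where "w = z(m := fst y, u := snd y)"
  have "y - (z m, z u) = (fst y - z m, snd y - z u)"
    by (simp add: prod_eq_iff)
  then have "\<bar>fst y - z m\<bar> \<le> \<delta>" "\<bar>snd y - z u\<bar> \<le> \<delta>" "0 \<le> \<delta>"
    unfolding \<delta>_def using norm_fst_le[of "fst y - z m" "snd y - z u"] norm_snd_le[of "snd y - z u" "fst y - z m"]
    by simp_all
  then have w: "w \<in> EucSp N" "\<forall>i<N. \<bar>w i - z i\<bar> \<le> \<delta>"
    using z mu unfolding w_def EucSp_def by auto
  have "(\<Sum>i<N. c (unit_mindex i) * (w i - z i)) = (\<Sum>i\<in>{m, u}. c (unit_mindex i) * (w i - z i))"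
    using mu unfolding w_def by (intro sum.mono_neutral_right) auto
  then have lin: "(\<Sum>i<N. c (unit_mindex i) * (w i - z i))
      = c (unit_mindex m) * fst (y - (z m, z u)) + c (unit_mindex u) * snd (y - (z m, z u))"
    using mu unfolding w_def by simp
  have "\<bar>f w - f z - (\<Sum>i<N. c (unit_mindex i) * (w i - z i))\<bar> \<le> (\<delta>/\<rho>)\<^sup>2 * pseries_majorant N c \<rho>"
    using y by (intro pseries_remainder_1_le[OF f z \<rho> w]) (auto simp: \<delta>_def)
  then have "\<bar>f w - f z - (c (unit_mindex m) * fst (y - (z m, z u)) + c (unit_mindex u) * snd (y - (z m, z u)))\<bar>
      \<le> pseries_majorant N c \<rho> / \<rho>\<^sup>2 * \<delta>\<^sup>2"
    unfolding lin by (simp add: power_divide mult.commute)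
  then show "norm (f (z(m := fst y, u := snd y)) - f (z(m := fst (z m, z u), u := snd (z m, z u)))
      - (c (unit_mindex m) * fst (y - (z m, z u)) + c (unit_mindex u) * snd (y - (z m, z u))))
      \<le> pseries_majorant N c \<rho> / \<rho>\<^sup>2 * (norm (y - (z m, z u)))\<^sup>2"
    unfolding w_def \<delta>_def by simp
qed

lemma pmonom_fun_upd:
  assumes "k < N"
  shows "pmonom N (h(k := x)) a = x ^ a k * pmonom N h (a(k := 0))"
proof -
  have "pmonom N (h(k := x)) (a(k := 0)) = pmonom N h (a(k := 0))"
    unfolding pmonom_def by (intro prod.cong) auto
  then show ?thesis
    using pmonom_split[OF assms, of "h(k := x)" a] by simp
qed

lemma has_pseries_slice:
  assumes f: "has_pseries N f z r c" and k: "k < N"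
    and w: "w \<in> EucSp N" "\<forall>i<N. \<bar>w i - z i\<bar> < r" and x: "\<bar>x\<bar> < r"
  shows "((\<lambda>a. c a * (x ^ a k * pmonom N (\<lambda>i. w i - z i) (a(k := 0)))) has_sum f (w(k := z k + x)))
    (mindices N)"
proof -
  have "w(k := z k + x) \<in> EucSp N"
    using w(1) k unfolding EucSp_def by auto
  moreover have "\<forall>i<N. \<bar>(w(k := z k + x)) i - z i\<bar> < r"
    using w(2) x by auto
  ultimately have "((\<lambda>a. c a * pmonom N (\<lambda>i. (w(k := z k + x)) i - z i) a) has_sum f (w(k := z k + x)))
      (mindices N)"
    by (rule has_pseriesD[OF f])
  moreover have "(\<lambda>i. (w(k := z k + x)) i - z i) = (\<lambda>i. w i - z i)(k := x)"
    by auto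
  ultimately show ?thesis
    by (simp add: pmonom_fun_upd[OF k])
qed

lemma pmonom_deriv_le:
  assumes \<rho>: "0 < \<rho>" and k: "k < N" and h: "\<forall>i<N. \<bar>h i\<bar> \<le> \<rho> / 4"
  shows "\<bar>real (a k) * h k ^ (a k - 1)\<bar> * \<bar>pmonom N h (a(k := 0))\<bar> \<le> 4 / \<rho> * \<rho> ^ mdeg N a"
proof -
  have "\<bar>real (a k) * h k ^ (a k - 1)\<bar> * \<bar>pmonom N h (a(k := 0))\<bar>
      \<le> (4 / \<rho> * \<rho> ^ a k) * \<rho> ^ mdeg N (a(k := 0))"
    using h \<rho> k by (intro mult_mono abs_power_deriv_le abs_pmonom_le) auto
  then show ?thesis
    using mdeg_split[OF k, of a] by (simp add: power_add mult.assoc)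
qed

lemma pmonom_diff_quotient_le:
  assumes \<rho>: "0 < \<rho>" and k: "k < N" and h: "\<forall>i<N. \<bar>h i\<bar> \<le> \<rho> / 4"
    and y: "y \<noteq> 0" "\<bar>h k + y\<bar> \<le> \<rho> / 4"
  shows "\<bar>((h k + y) ^ a k - h k ^ a k) / y - real (a k) * h k ^ (a k - 1)\<bar> * \<bar>pmonom N h (a(k := 0))\<bar>
    \<le> \<bar>y\<bar> * (16 / \<rho>\<^sup>2 * \<rho> ^ mdeg N a)"
proof -
  have "\<bar>((h k + y) ^ a k - h k ^ a k) / y - real (a k) * h k ^ (a k - 1)\<bar> * \<bar>pmonom N h (a(k := 0))\<bar>
      \<le> (\<bar>y\<bar> * (16 / \<rho>\<^sup>2 * \<rho> ^ a k)) * \<rho> ^ mdeg N (a(k := 0))"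
    using h \<rho> k y by (intro mult_mono abs_power_diff_quotient_le abs_pmonom_le) auto
  then show ?thesis
    using mdeg_split[OF k, of a] by (simp add: power_add mult.assoc)
qed

lemma pseries_formal_deriv_summable:
  assumes M: "((\<lambda>a. \<bar>c a\<bar> * \<rho> ^ mdeg N a) has_sum M) (mindices N)"
    and \<rho>: "0 < \<rho>" and k: "k < N" and h: "\<forall>i<N. \<bar>h i\<bar> \<le> \<rho> / 4"
  shows "(\<lambda>a. c a * (real (a k) * h k ^ (a k - 1) * pmonom N h (a(k := 0)))) summable_on mindices N"
proof -
  have "norm (c a * (real (a k) * h k ^ (a k - 1) * pmonom N h (a(k := 0)))) \<le> 4 / \<rho> * (\<bar>c a\<bar> * \<rho> ^ mdeg N a)" for a
    using mult_left_mono[OF pmonom_deriv_le[OF \<rho> k h, of a], of "\<bar>c a\<bar>"]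
    by (simp add: abs_mult mult.left_commute)
  then have "(\<lambda>a. norm (c a * (real (a k) * h k ^ (a k - 1) * pmonom N h (a(k := 0))))) summable_on mindices N"
    by (rule Infinite_Sum.abs_summable_on_comparison_test'[OF summable_on_cmult_right[OF has_sum_imp_summable[OF M]]])
  then show ?thesis
    by (rule abs_summable_summable)
qed

text \<open>The radius \<open>r / 8\<close> is \<open>\<rho> / 4\<close> for \<open>\<rho> = r / 2\<close>, where the majorant at \<open>\<rho>\<close> is finite
  and the bounds on \<open>n s^(n-1)\<close> and its difference quotients apply.\<close>
lemma has_pseries_coordinate_deriv:
  assumes f: "has_pseries N f z r c" and z: "z \<in> EucSp N" and k: "k < N"
    and w: "w \<in> EucSp N" "\<forall>i<N. \<bar>w i - z i\<bar> < r / 8"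
  defines "h \<equiv> \<lambda>i. w i - z i"
  obtains D where "((\<lambda>a. c a * (real (a k) * pmonom N h (a(k := a k - 1)))) has_sum D) (mindices N)"
    and "((\<lambda>t. f (w(k := t))) has_real_derivative D) (at (w k))"
proof -
  define \<rho> where "\<rho> = r / 2"
  have \<rho>: "0 < \<rho>" "\<rho> < r"
    using f unfolding has_pseries_def \<rho>_def by auto
  define M where "M = pseries_majorant N c \<rho>"
  have M: "((\<lambda>a. \<bar>c a\<bar> * \<rho> ^ mdeg N a) has_sum M) (mindices N)"
    unfolding M_def by (rule has_pseries_majorant[OF f z \<rho>])
  have hK: "\<forall>i<N. \<bar>h i\<bar> \<le> \<rho> / 4" and hk: "\<bar>h k\<bar> < \<rho> / 4"
    using w(2) k unfolding h_def \<rho>_def by (simp_all add: less_imp_le)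
  define \<phi>' where "\<phi>' a = c a * (real (a k) * pmonom N h (a(k := a k - 1)))" for a
  have \<phi>': "\<phi>' a = c a * (real (a k) * h k ^ (a k - 1) * pmonom N h (a(k := 0)))" for a
    unfolding \<phi>'_def using pmonom_split[OF k, of h "a(k := a k - 1)"] by (simp add: mult.assoc)
  obtain D where D: "(\<phi>' has_sum D) (mindices N)"
    using pseries_formal_deriv_summable[OF M \<rho>(1) k hK] unfolding \<phi>' summable_on_def by blast
  define e where "e = \<rho> / 4 - \<bar>h k\<bar>"
  have e: "0 < e"
    using hk unfolding e_def by simp
  have near: "\<bar>h k + y\<bar> < \<rho> / 4" if "\<bar>y\<bar> < e" for y
    using abs_triangle_ineq[of "h k" y] that unfolding e_def by linarith
  have "((\<lambda>x. f (w(k := z k + x))) has_real_derivative D) (at (h k))"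
  proof (rule has_sum_has_real_derivative[OF e _ D has_sum_cmult_right[OF M]])
    show "((\<lambda>a. c a * (x ^ a k * pmonom N h (a(k := 0)))) has_sum f (w(k := z k + x))) (mindices N)"
      if "\<bar>x - h k\<bar> < e" for x
      using near[of "x - h k"] that w \<rho> unfolding h_def \<rho>_def by (intro has_pseries_slice[OF f k]) auto
    fix a and y :: real
    assume y: "y \<noteq> 0" "\<bar>y\<bar> < e"
    have "(c a * ((h k + y) ^ a k * pmonom N h (a(k := 0))) - c a * (h k ^ a k * pmonom N h (a(k := 0)))) / y - \<phi>' a
        = c a * ((((h k + y) ^ a k - h k ^ a k) / y - real (a k) * h k ^ (a k - 1)) * pmonom N h (a(k := 0)))"
      unfolding \<phi>' using y(1) by (simp add: field_simps)
    then show "\<bar>(c a * ((h k + y) ^ a k * pmonom N h (a(k := 0))) - c a * (h k ^ a k * pmonom N h (a(k := 0)))) / y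
        - \<phi>' a\<bar> \<le> \<bar>y\<bar> * (16 / \<rho>\<^sup>2 * (\<bar>c a\<bar> * \<rho> ^ mdeg N a))"
      using mult_left_mono[OF pmonom_diff_quotient_le[OF \<rho>(1) k hK y(1) less_imp_le[OF near[OF y(2)]]],
          of "\<bar>c a\<bar>" a]
      by (simp add: abs_mult mult.left_commute)
  qed
  moreover have "((\<lambda>t. t - z k) has_real_derivative 1) (at (w k))"
    by (auto intro!: derivative_eq_intros)
  ultimately have "((\<lambda>t. f (w(k := z k + (t - z k)))) has_real_derivative D * 1) (at (w k))"
    unfolding h_def by (rule DERIV_chain2)
  then have "((\<lambda>t. f (w(k := t))) has_real_derivative D) (at (w k))"
    by simp
  with D show ?thesis
    unfolding \<phi>'_def by (rule that)
qed

lemma has_sum_mindices_shift: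
  assumes k: "k < N" and g0: "\<And>a. a \<in> mindices N \<Longrightarrow> a k = 0 \<Longrightarrow> g a = 0"
  shows "((\<lambda>b. g (b(k := b k + 1))) has_sum S) (mindices N) \<longleftrightarrow> (g has_sum S) (mindices N)"
proof -
  define \<sigma> where "\<sigma> b = b(k := b k + 1)" for b :: "nat \<Rightarrow> nat"
  have inj: "inj_on \<sigma> (mindices N)"
  proof (rule inj_onI)
    fix b b'
    assume "\<sigma> b = \<sigma> b'"
    then have "\<forall>i. \<sigma> b i = \<sigma> b' i"
      by simp
    then show "b = b'"
      unfolding \<sigma>_def by (auto simp: fun_eq_iff split: if_splits)
  qed
  have "\<sigma> ` mindices N = {a \<in> mindices N. a k \<noteq> 0}"
  proof
    show "\<sigma> ` mindices N \<subseteq> {a \<in> mindices N. a k \<noteq> 0}"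
      unfolding \<sigma>_def mindices_def using k by auto
    show "{a \<in> mindices N. a k \<noteq> 0} \<subseteq> \<sigma> ` mindices N"
    proof
      fix a
      assume a: "a \<in> {a \<in> mindices N. a k \<noteq> 0}"
      then have "a = \<sigma> (a(k := a k - 1))"
        unfolding \<sigma>_def by (auto simp: fun_eq_iff)
      moreover have "a(k := a k - 1) \<in> mindices N"
        using a k unfolding mindices_def by auto
      ultimately show "a \<in> \<sigma> ` mindices N"
        by blast
    qed
  qed
  moreover have "(g has_sum S) {a \<in> mindices N. a k \<noteq> 0} \<longleftrightarrow> (g has_sum S) (mindices N)"
    by (rule has_sum_cong_neutral) (use g0 in auto)
  ultimately have "(g has_sum S) (\<sigma> ` mindices N) \<longleftrightarrow> (g has_sum S) (mindices N)"
    by simp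
  then show ?thesis
    using has_sum_reindex[OF inj, of g S] by (simp add: \<sigma>_def comp_def)
qed

lemma has_pseries_pd:
  assumes f: "has_pseries N f z r c" and z: "z \<in> EucSp N" and k: "k < N"
  shows "has_pseries N (pd k f) z (r / 8) (\<lambda>b. real (b k + 1) * c (b(k := b k + 1)))"
  unfolding has_pseries_def
proof (intro conjI ballI impI)
  show "0 < r / 8"
    using f by (simp add: has_pseries_def)
  fix w
  assume w: "w \<in> EucSp N" "\<forall>i<N. \<bar>w i - z i\<bar> < r / 8"
  define h where "h = (\<lambda>i. w i - z i)"
  obtain D where D: "((\<lambda>a. c a * (real (a k) * pmonom N h (a(k := a k - 1)))) has_sum D) (mindices N)"
    and dD: "((\<lambda>t. f (w(k := t))) has_real_derivative D) (at (w k))"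
    using has_pseries_coordinate_deriv[OF f z k w] unfolding h_def .
  have "pd k f w = D"
    unfolding pd_def by (rule DERIV_imp_deriv[OF dD])
  moreover have "((\<lambda>b. real (b k + 1) * c (b(k := b k + 1)) * pmonom N h b) has_sum D) (mindices N)"
    using D has_sum_mindices_shift[OF k, of "\<lambda>a. c a * (real (a k) * pmonom N h (a(k := a k - 1)))" D]
    by (simp add: ac_simps)
  ultimately show "((\<lambda>b. real (b k + 1) * c (b(k := b k + 1)) * pmonom N (\<lambda>i. w i - z i) b) has_sum pd k f w) (mindices N)"
    unfolding h_def by simp
qed

lemma has_pseries_pd_at_center:
  assumes "has_pseries N f z r c" "z \<in> EucSp N" "k < N"
  shows "pd k f z = c (unit_mindex k)"
proof -
  have "(\<lambda>_. 0)(k := 1) = unit_mindex k"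
    unfolding unit_mindex_def by auto
  then show ?thesis
    using has_pseries_at_center[OF has_pseries_pd[OF assms] assms(2)] by simp
qed

lemma real_analytic_on_pd:
  assumes "real_analytic_on N f D" "D \<subseteq> EucSp N" "k < N"
  shows "real_analytic_on N (pd k f) D"
  using assms has_pseries_pd unfolding real_analytic_on_iff_has_pseries by blast

lemma real_analytic_on_has_real_derivative:
  assumes f: "real_analytic_on N f D" and D: "D \<subseteq> EucSp N" and z: "z \<in> D" and i: "i < N"
  shows "((\<lambda>t. f (z(i := t))) has_real_derivative pd i f z) (at (z i))"
proof -
  obtain r c where fz: "has_pseries N f z r c"
    using f z unfolding real_analytic_on_iff_has_pseries by blast
  moreover have "z \<in> EucSp N" "\<forall>j<N. \<bar>z j - z j\<bar> < r / 8"
    using fz z D by (auto simp: has_pseries_def)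
  ultimately obtain d where "((\<lambda>t. f (z(i := t))) has_real_derivative d) (at (z i))"
    using has_pseries_coordinate_deriv[OF fz _ i] by metis
  moreover from this have "pd i f z = d"
    unfolding pd_def by (rule DERIV_imp_deriv)
  ultimately show ?thesis
    by simp
qed

lemma real_analytic_on_has_derivative_pair:
  assumes f: "real_analytic_on N f D" and D: "D \<subseteq> EucSp N" and z: "z \<in> D"
    and mu: "m < N" "u < N" "m \<noteq> u"
  shows "((\<lambda>x. f (z(m := fst x, u := snd x))) has_derivative
           (\<lambda>h. pd m f z * fst h + pd u f z * snd h)) (at (z m, z u))"
proof -
  obtain r c where fz: "has_pseries N f z r c"
    using f z unfolding real_analytic_on_iff_has_pseries by blast
  have zE: "z \<in> EucSp N"
    using z D by blast
  show ?thesis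
    using has_pseries_has_derivative_pair[OF fz zE mu]
    by (simp add: has_pseries_pd_at_center[OF fz zE mu(1)] has_pseries_pd_at_center[OF fz zE mu(2)])
qed

lemma real_analytic_on_continuous_box:
  assumes f: "real_analytic_on N f D" and D: "D \<subseteq> EucSp N" and z: "z \<in> D" and e: "0 < e"
  shows "\<exists>d>0. \<forall>w\<in>EucSp N. (\<forall>i<N. \<bar>w i - z i\<bar> < d) \<longrightarrow> \<bar>f w - f z\<bar> < e"
proof -
  obtain r c where fz: "has_pseries N f z r c"
    using f z unfolding real_analytic_on_iff_has_pseries by blast
  show ?thesis
    using has_pseries_continuous_box[OF fz _ e] z D by blast
qed

section \<open>Coordinate boxes\<close>

definition coord_box :: "nat \<Rightarrow> (nat \<Rightarrow> real set) \<Rightarrow> (nat \<Rightarrow> real) set" where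
  "coord_box N L = {y \<in> EucSp N. \<forall>i<N. y i \<in> L i}"

lemma open_coord_cylinder:
  assumes "\<And>i. i < N \<Longrightarrow> open (U i)"
  shows "open {v :: nat \<Rightarrow> real. \<forall>i<N. v i \<in> U i}"
proof -
  have "open {v :: nat \<Rightarrow> real. \<forall>i\<in>{..<N}. v (id i) \<in> U i}"
    by (rule product_topology_basis') (use assms in auto)
  moreover have "{v :: nat \<Rightarrow> real. \<forall>i\<in>{..<N}. v (id i) \<in> U i} = {v. \<forall>i<N. v i \<in> U i}"
    by auto
  ultimately show ?thesis
    by simp
qed

lemma openin_coord_box:
  assumes "\<And>i. i < N \<Longrightarrow> open (L i)"
  shows "openin (top_of_set (EucSp N)) (coord_box N L)"
proof -
  have "coord_box N L = EucSp N \<inter> {v. \<forall>i<N. v i \<in> L i}"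
    unfolding coord_box_def by auto
  then show ?thesis
    using openin_open_Int[OF open_coord_cylinder[OF assms]] by simp
qed

lemma coord_box_fun_upd: "y \<in> coord_box N L \<Longrightarrow> i < N \<Longrightarrow> t \<in> L i \<Longrightarrow> y(i := t) \<in> coord_box N L"
  unfolding coord_box_def EucSp_def by auto

lemma open_fun_contains_finite_box:
  fixes T :: "(nat \<Rightarrow> real) set"
  assumes "open T" "z \<in> T"
  obtains F d where "finite F" "0 < d" "\<And>v. \<forall>i\<in>F. \<bar>v i - z i\<bar> < d \<Longrightarrow> v \<in> T"
proof -
  have "openin (product_topology (\<lambda>i. euclidean) UNIV) T"
    using assms(1) unfolding open_fun_def .
  with assms(2) obtain X where X: "z \<in> (\<Pi>\<^sub>E i\<in>UNIV. X i)" "\<forall>i. open (X i)" "finite {i. X i \<noteq> UNIV}"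
      "(\<Pi>\<^sub>E i\<in>UNIV. X i) \<subseteq> T"
    by (auto dest: product_topology_open_contains_basis)
  have "\<forall>i. \<exists>e>0. ball (z i) e \<subseteq> X i"
    using X(1,2) by (meson PiE_E UNIV_I open_contains_ball)
  then obtain \<epsilon> where \<epsilon>: "\<And>i. \<epsilon> i > 0" "\<And>i. ball (z i) (\<epsilon> i) \<subseteq> X i"
    by metis
  define F where "F = {i. X i \<noteq> UNIV}"
  have fin: "finite (insert 1 (\<epsilon> ` F))"
    using X(3) unfolding F_def by simp
  show ?thesis
  proof (rule that[of F "Min (insert 1 (\<epsilon> ` F))"])
    show "finite F" "0 < Min (insert 1 (\<epsilon> ` F))"
      using X(3) fin \<epsilon>(1) unfolding F_def by (auto simp: Min_gr_iff)
    fix v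
    assume v: "\<forall>i\<in>F. \<bar>v i - z i\<bar> < Min (insert 1 (\<epsilon> ` F))"
    have "v i \<in> X i" for i
    proof (cases "i \<in> F")
      case True
      have "\<bar>v i - z i\<bar> < \<epsilon> i"
        using v True Min_le[OF fin, of "\<epsilon> i"] by fastforce
      then show ?thesis
        using \<epsilon>(2)[of i] by (auto simp: dist_real_def abs_minus_commute)
    qed (simp add: F_def)
    then show "v \<in> T"
      using X(4) by auto
  qed
qed

lemma openin_EucSp_contains_box:
  assumes "openin (top_of_set (EucSp N)) D" "z \<in> D"
  obtains d where "d > 0" "\<And>v. v \<in> EucSp N \<Longrightarrow> \<forall>i<N. \<bar>v i - z i\<bar> < d \<Longrightarrow> v \<in> D"
proof -
  obtain T where T: "open T" "D = EucSp N \<inter> T"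
    using assms(1) openin_open by blast
  then obtain F d where Fd: "finite F" "0 < d" "\<And>v. \<forall>i\<in>F. \<bar>v i - z i\<bar> < d \<Longrightarrow> v \<in> T"
    using open_fun_contains_finite_box assms(2) by blast
  show ?thesis
  proof (rule that[OF Fd(2)])
    fix v
    assume v: "v \<in> EucSp N" "\<forall>i<N. \<bar>v i - z i\<bar> < d"
    have "\<bar>v i - z i\<bar> < d" for i
      using v assms(2) T(2) Fd(2) unfolding EucSp_def by (cases "i < N") auto
    then show "v \<in> D"
      using Fd(3) T(2) v(1) by blast
  qed
qed

lemma real_analytic_on_continuous_on:
  assumes f: "real_analytic_on N f D" and D: "D \<subseteq> EucSp N"
  shows "continuous_on D f"
  unfolding continuous_on_eq_continuous_within continuous_within_topological
proof (intro ballI allI impI)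
  fix z B
  assume z: "z \<in> D" and B: "open B" "f z \<in> B"
  then obtain e where e: "0 < e" "ball (f z) e \<subseteq> B"
    using open_contains_ball by blast
  obtain d where d: "0 < d" "\<forall>w\<in>EucSp N. (\<forall>i<N. \<bar>w i - z i\<bar> < d) \<longrightarrow> \<bar>f w - f z\<bar> < e"
    using real_analytic_on_continuous_box[OF f D z e(1)] by blast
  show "\<exists>A. open A \<and> z \<in> A \<and> (\<forall>y\<in>D. y \<in> A \<longrightarrow> f y \<in> B)"
  proof (intro exI conjI ballI impI)
    show "open {v. \<forall>i<N. v i \<in> ball (z i) d}"
      by (rule open_coord_cylinder) simp
    show "z \<in> {v. \<forall>i<N. v i \<in> ball (z i) d}"
      using d by simp
    fix y
    assume "y \<in> D" "y \<in> {v. \<forall>i<N. v i \<in> ball (z i) d}"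
    then have "\<bar>f y - f z\<bar> < e"
      using d(2) D by (auto simp: dist_real_def abs_minus_commute)
    then show "f y \<in> B"
      using e(2) by (auto simp: dist_real_def abs_minus_commute)
  qed
qed

lemma continuous_on_fun_upd_line: "continuous_on S (\<lambda>t::real. v(u := t))"
proof (rule continuous_on_coordinatewise_then_product)
  fix i
  show "continuous_on S (\<lambda>t. (v(u := t)) i)"
    by (cases "i = u") (simp_all add: continuous_on_id continuous_on_const)
qed

lemma open_fun_upd_pair_preimage:
  assumes W: "openin (top_of_set (EucSp N)) W" and z: "z \<in> EucSp N" and mu: "m < N" "u < N"
  shows "open {x :: real \<times> real. z(m := fst x, u := snd x) \<in> W}"
proof -
  obtain T where T: "open T" "W = EucSp N \<inter> T"
    using W openin_open by blast
  have "continuous_on UNIV (\<lambda>x::real \<times> real. z(m := fst x, u := snd x))"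
  proof (rule continuous_on_coordinatewise_then_product)
    fix i
    show "continuous_on UNIV (\<lambda>x::real \<times> real. (z(m := fst x, u := snd x)) i)"
      by (cases "i = u"; cases "i = m") (simp_all add: continuous_on_fst continuous_on_snd continuous_on_id)
  qed
  then have "open ((\<lambda>x. z(m := fst x, u := snd x)) -` T)"
    by (rule open_vimage[OF T(1)])
  moreover have "z(m := s, u := t) \<in> EucSp N" for s t
    using z mu unfolding EucSp_def by auto
  ultimately show ?thesis
    using T(2) by (simp add: vimage_def)
qed

section \<open>Level charts\<close>

text \<open>In a level chart the coordinate \<open>u\<close> is replaced by the value of \<open>p\<close>:
  \<open>y \<mapsto> y(u := g y)\<close> maps the box onto \<open>W\<close>, with inverse \<open>w \<mapsto> w(u := p w)\<close>.\<close>
definition level_chart ::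
  "nat \<Rightarrow> nat \<Rightarrow> ((nat \<Rightarrow> real) \<Rightarrow> real) \<Rightarrow> (nat \<Rightarrow> real set) \<Rightarrow> ((nat \<Rightarrow> real) \<Rightarrow> real)
   \<Rightarrow> (nat \<Rightarrow> real) set \<Rightarrow> bool" where
  "level_chart N u p L g W \<longleftrightarrow>
     (\<forall>i. open (L i) \<and> convex (L i)) \<and> openin (top_of_set (EucSp N)) W \<and>
     (\<forall>y\<in>coord_box N L. y(u := g y) \<in> W \<and> p (y(u := g y)) = y u) \<and>
     (\<forall>w\<in>W. w(u := p w) \<in> coord_box N L \<and> g (w(u := p w)) = w u)"

lemma openin_level_slab:
  fixes p :: "(nat \<Rightarrow> real) \<Rightarrow> real"
  assumes D: "openin (top_of_set (EucSp N)) D" and p: "continuous_on D p" and u: "u < N"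
  shows "openin (top_of_set (EucSp N))
    {w \<in> D. (\<forall>i<N. i \<noteq> u \<longrightarrow> \<bar>w i - z0 i\<bar> < \<eta>) \<and> a < w u \<and> w u < b \<and> \<bar>p w - c0\<bar> < \<theta>}"
proof -
  have "openin (top_of_set (EucSp N)) (D \<inter> p -` ball c0 \<theta>)"
    using openin_trans[OF continuous_openin_preimage_gen[OF p open_ball] D] by (simp add: Int_commute)
  moreover have "openin (top_of_set (EucSp N)) (coord_box N (\<lambda>i. if i = u then {a<..<b} else ball (z0 i) \<eta>))"
    by (rule openin_coord_box) auto
  ultimately have "openin (top_of_set (EucSp N))
      ((D \<inter> p -` ball c0 \<theta>) \<inter> coord_box N (\<lambda>i. if i = u then {a<..<b} else ball (z0 i) \<eta>))"
    by (rule openin_Int)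
  moreover have "(D \<inter> p -` ball c0 \<theta>) \<inter> coord_box N (\<lambda>i. if i = u then {a<..<b} else ball (z0 i) \<eta>)
      = {w \<in> D. (\<forall>i<N. i \<noteq> u \<longrightarrow> \<bar>w i - z0 i\<bar> < \<eta>) \<and> a < w u \<and> w u < b \<and> \<bar>p w - c0\<bar> < \<theta>}"
    using openin_imp_subset[OF D] u unfolding coord_box_def by (auto simp: dist_real_def abs_minus_commute)
  ultimately show ?thesis
    by simp
qed

lemma level_chart_of_slab:
  fixes p :: "(nat \<Rightarrow> real) \<Rightarrow> real" and z0 :: "nat \<Rightarrow> real" and N u :: nat and \<eta> :: real
  defines "slab \<equiv> {v \<in> EucSp N. \<forall>i<N. i \<noteq> u \<longrightarrow> \<bar>v i - z0 i\<bar> < \<eta>}"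
  assumes u: "u < N" and D: "openin (top_of_set (EucSp N)) D" and p: "continuous_on D p"
    and ab: "a \<le> b" and line: "\<And>v t. v \<in> slab \<Longrightarrow> t \<in> {a..b} \<Longrightarrow> v(u := t) \<in> D"
    and inj: "\<And>v. v \<in> slab \<Longrightarrow> inj_on (\<lambda>t. p (v(u := t))) {a..b}"
    and ends: "\<And>v. v \<in> slab \<Longrightarrow> (p (v(u := a)) < c0 - \<theta> \<and> c0 + \<theta> < p (v(u := b))) \<or>
                                  (p (v(u := b)) < c0 - \<theta> \<and> c0 + \<theta> < p (v(u := a)))"
  defines "L \<equiv> \<lambda>i. if i = u then ball c0 \<theta> else ball (z0 i) \<eta>"
    and "g \<equiv> \<lambda>y. the_inv_into {a..b} (\<lambda>t. p (y(u := t))) (y u)"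
    and "W \<equiv> {w \<in> D. (\<forall>i<N. i \<noteq> u \<longrightarrow> \<bar>w i - z0 i\<bar> < \<eta>) \<and> a < w u \<and> w u < b \<and> \<bar>p w - c0\<bar> < \<theta>}"
  shows "level_chart N u p L g W"
proof -
  have W_slab: "w \<in> W \<longleftrightarrow> w \<in> D \<and> w \<in> slab \<and> a < w u \<and> w u < b \<and> \<bar>p w - c0\<bar> < \<theta>" for w
    using openin_imp_subset[OF D] unfolding W_def slab_def by auto
  have box: "y \<in> coord_box N L \<longleftrightarrow> y \<in> slab \<and> \<bar>y u - c0\<bar> < \<theta>" for y
    unfolding coord_box_def slab_def L_def using u by (auto simp: dist_real_def abs_minus_commute)
  have slab_upd: "v(u := t) \<in> slab \<longleftrightarrow> v \<in> slab" for v t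
    using u unfolding slab_def EucSp_def by auto
  have to_W: "y(u := g y) \<in> W \<and> p (y(u := g y)) = y u" if "y \<in> coord_box N L" for y
  proof -
    have y: "y \<in> slab" "\<bar>y u - c0\<bar> < \<theta>"
      using box that by auto
    have "continuous_on {a..b} (\<lambda>t. p (y(u := t)))"
      using line[OF y(1)] by (intro continuous_on_compose2[OF p continuous_on_fun_upd_line]) auto
    then obtain t where t: "t \<in> {a<..<b}" "p (y(u := t)) = y u"
      using IVT_open_interval[OF _ ab, of "\<lambda>t. p (y(u := t))" "y u"] ends[OF y(1)] y(2) by force
    then have "g y = t"
      unfolding g_def by (intro the_inv_into_f_eq[OF inj[OF y(1)]]) auto
    then show ?thesis
      using t y line[OF y(1), of t] slab_upd unfolding W_slab by auto
  qed
  have from_W: "w(u := p w) \<in> coord_box N L \<and> g (w(u := p w)) = w u" if w: "w \<in> W" for w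
  proof -
    have "the_inv_into {a..b} (\<lambda>t. p (w(u := t))) (p (w(u := w u))) = w u"
      using w unfolding W_slab by (intro the_inv_into_f_f[OF inj]) auto
    then show ?thesis
      using w box slab_upd unfolding W_slab g_def by simp
  qed
  have "openin (top_of_set (EucSp N)) W"
    unfolding W_def by (rule openin_level_slab[OF D p u])
  moreover have "open (L i) \<and> convex (L i)" for i
    unfolding L_def by auto
  ultimately show ?thesis
    unfolding level_chart_def using to_W from_W by blast
qed

lemma real_analytic_on_coordinate_line_inj:
  assumes p: "real_analytic_on N p D" and D: "D \<subseteq> EucSp N" and u: "u < N"
    and nz: "\<forall>z\<in>D. pd u p z \<noteq> 0" and line: "\<And>t. t \<in> {a..b} \<Longrightarrow> v(u := t) \<in> D"
  shows "inj_on (\<lambda>t. p (v(u := t))) {a..b}"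
proof (rule inj_on_interval_if_deriv_nonzero)
  fix t
  assume t: "t \<in> {a..b}"
  show "((\<lambda>t. p (v(u := t))) has_real_derivative pd u p (v(u := t))) (at t)"
    using real_analytic_on_has_real_derivative[OF p D line[OF t] u] by simp
  show "pd u p (v(u := t)) \<noteq> 0"
    using nz line[OF t] by blast
qed

lemma exists_level_margin:
  assumes p: "real_analytic_on N p D" and D: "D \<subseteq> EucSp N" and u: "u < N"
    and line: "\<And>t. t \<in> {a..b} \<Longrightarrow> z0(u := t) \<in> D" and inj: "inj_on (\<lambda>t. p (z0(u := t))) {a..b}"
    and ab: "a < z0 u" "z0 u < b"
  obtains \<theta> \<eta> where "0 < \<theta>" "0 < \<eta>"
    "\<And>v. v \<in> EucSp N \<Longrightarrow> \<forall>i<N. i \<noteq> u \<longrightarrow> \<bar>v i - z0 i\<bar> < \<eta> \<Longrightarrow>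
      (p (v(u := a)) < p z0 - \<theta> \<and> p z0 + \<theta> < p (v(u := b))) \<or>
      (p (v(u := b)) < p z0 - \<theta> \<and> p z0 + \<theta> < p (v(u := a)))"
proof -
  define fa fb c0 where "fa = p (z0(u := a))" and "fb = p (z0(u := b))" and "c0 = p z0"
  have "continuous_on {a..b} (\<lambda>t. p (z0(u := t)))"
    using line by (intro continuous_on_compose2[OF real_analytic_on_continuous_on[OF p D]
        continuous_on_fun_upd_line]) auto
  then have mono: "(fa < c0 \<and> c0 < fb) \<or> (fb < c0 \<and> c0 < fa)"
    using continuous_inj_imp_mono[OF ab _ inj] unfolding fa_def fb_def c0_def by simp
  define \<theta> where "\<theta> = min \<bar>fa - c0\<bar> \<bar>fb - c0\<bar> / 2"
  have \<theta>: "0 < \<theta>" "2 * \<theta> \<le> \<bar>fa - c0\<bar>" "2 * \<theta> \<le> \<bar>fb - c0\<bar>"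
    using mono unfolding \<theta>_def by auto
  have "a \<in> {a..b}" "b \<in> {a..b}"
    using ab by auto
  obtain \<eta>a where \<eta>a: "0 < \<eta>a" "\<forall>w\<in>EucSp N. (\<forall>i<N. \<bar>w i - (z0(u := a)) i\<bar> < \<eta>a) \<longrightarrow> \<bar>p w - fa\<bar> < \<theta>"
    using real_analytic_on_continuous_box[OF p D line[OF \<open>a \<in> {a..b}\<close>] \<theta>(1)] unfolding fa_def by blast
  obtain \<eta>b where \<eta>b: "0 < \<eta>b" "\<forall>w\<in>EucSp N. (\<forall>i<N. \<bar>w i - (z0(u := b)) i\<bar> < \<eta>b) \<longrightarrow> \<bar>p w - fb\<bar> < \<theta>"
    using real_analytic_on_continuous_box[OF p D line[OF \<open>b \<in> {a..b}\<close>] \<theta>(1)] unfolding fb_def by blast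
  show ?thesis
  proof (rule that[OF \<theta>(1), of "min \<eta>a \<eta>b"])
    show "0 < min \<eta>a \<eta>b"
      using \<eta>a \<eta>b by simp
    fix v
    assume "v \<in> EucSp N" "\<forall>i<N. i \<noteq> u \<longrightarrow> \<bar>v i - z0 i\<bar> < min \<eta>a \<eta>b"
    then have "\<bar>p (v(u := a)) - fa\<bar> < \<theta>" "\<bar>p (v(u := b)) - fb\<bar> < \<theta>"
      using \<eta>a \<eta>b u unfolding EucSp_def by auto
    then show "(p (v(u := a)) < p z0 - \<theta> \<and> p z0 + \<theta> < p (v(u := b))) \<or>
        (p (v(u := b)) < p z0 - \<theta> \<and> p z0 + \<theta> < p (v(u := a)))"
      using mono \<theta> unfolding c0_def by auto
  qed
qed

lemma exists_level_chart:
  assumes p: "real_analytic_on N p D" and D: "D \<subseteq> EucSp N" "openin (top_of_set (EucSp N)) D"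
    and u: "u < N" and nz: "\<forall>z\<in>D. pd u p z \<noteq> 0" and z0: "z0 \<in> D"
  obtains L g W where "level_chart N u p L g W" "z0 \<in> W" "W \<subseteq> D"
proof -
  obtain \<epsilon> where \<epsilon>: "0 < \<epsilon>" "\<And>v. v \<in> EucSp N \<Longrightarrow> \<forall>i<N. \<bar>v i - z0 i\<bar> < \<epsilon> \<Longrightarrow> v \<in> D"
    using openin_EucSp_contains_box[OF D(2) z0] by blast
  define a b where "a = z0 u - \<epsilon> / 2" and "b = z0 u + \<epsilon> / 2"
  have line: "v(u := t) \<in> D" if "v \<in> EucSp N" "\<forall>i<N. i \<noteq> u \<longrightarrow> \<bar>v i - z0 i\<bar> < \<epsilon>" "t \<in> {a..b}" for v t
    using that u \<epsilon> unfolding a_def b_def by (intro \<epsilon>(2)) (auto simp: EucSp_def)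
  have inj: "inj_on (\<lambda>t. p (v(u := t))) {a..b}"
    if "v \<in> EucSp N" "\<forall>i<N. i \<noteq> u \<longrightarrow> \<bar>v i - z0 i\<bar> < \<epsilon>" for v
    using real_analytic_on_coordinate_line_inj[OF p D(1) u nz line[OF that]] .
  have z0E: "z0 \<in> EucSp N" "\<forall>i<N. i \<noteq> u \<longrightarrow> \<bar>z0 i - z0 i\<bar> < \<epsilon>"
    using \<epsilon> z0 D by auto
  have ab: "a < z0 u" "z0 u < b"
    using \<epsilon> unfolding a_def b_def by auto
  obtain \<theta> \<eta> where \<theta>: "0 < \<theta>" and \<eta>: "0 < \<eta>" and ends: "\<And>v. v \<in> EucSp N \<Longrightarrow>
      \<forall>i<N. i \<noteq> u \<longrightarrow> \<bar>v i - z0 i\<bar> < \<eta> \<Longrightarrow>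
      (p (v(u := a)) < p z0 - \<theta> \<and> p z0 + \<theta> < p (v(u := b))) \<or>
      (p (v(u := b)) < p z0 - \<theta> \<and> p z0 + \<theta> < p (v(u := a)))"
    using exists_level_margin[OF p D(1) u line[OF z0E] inj[OF z0E] ab] by blast
  define \<eta>' where "\<eta>' = min \<epsilon> \<eta>"
  have "level_chart N u p (\<lambda>i. if i = u then ball (p z0) \<theta> else ball (z0 i) \<eta>')
      (\<lambda>y. the_inv_into {a..b} (\<lambda>t. p (y(u := t))) (y u))
      {w \<in> D. (\<forall>i<N. i \<noteq> u \<longrightarrow> \<bar>w i - z0 i\<bar> < \<eta>') \<and> a < w u \<and> w u < b \<and> \<bar>p w - p z0\<bar> < \<theta>}"
    using ab line inj ends unfolding \<eta>'_def by (intro level_chart_of_slab[OF u D(2) real_analytic_on_continuous_on[OF p D(1)]]) auto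
  moreover have "z0 \<in> {w \<in> D. (\<forall>i<N. i \<noteq> u \<longrightarrow> \<bar>w i - z0 i\<bar> < \<eta>') \<and> a < w u \<and> w u < b \<and> \<bar>p w - p z0\<bar> < \<theta>}"
    using z0 ab \<theta> \<eta> \<epsilon> unfolding \<eta>'_def by auto
  ultimately show ?thesis
    by (rule that) auto
qed

text \<open>Implicit differentiation of \<open>Q y = q (y(u := g y))\<close>: along a coordinate \<open>m \<noteq> u\<close> the
  level set of \<open>p\<close> is followed, along \<open>u\<close> the value of \<open>p\<close> changes.\<close>
lemma level_chart_has_derivative:
  assumes chart: "level_chart N u p L g W" and W: "W \<subseteq> D"
    and p: "real_analytic_on N p D" and q: "real_analytic_on N q D" and D: "D \<subseteq> EucSp N"
    and nz: "\<forall>z\<in>D. pd u p z \<noteq> 0" and mu: "m < N" "u < N" "m \<noteq> u" and y: "y \<in> coord_box N L"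
  defines "z \<equiv> y(u := g y)"
  shows "((\<lambda>x. q ((y(m := fst x, u := snd x))(u := g (y(m := fst x, u := snd x))))) has_derivative
      (\<lambda>h. (pd m q z - pd u q z * pd m p z / pd u p z) * fst h + (pd u q z / pd u p z) * snd h))
      (at (y m, y u))"
proof -
  have zW: "z \<in> W" and pz: "p z = y u" and Wo: "openin (top_of_set (EucSp N)) W"
    and inv: "\<And>w. w \<in> W \<Longrightarrow> g (w(u := p w)) = w u"
    using chart y unfolding level_chart_def z_def by auto
  define S where "S = {x :: real \<times> real. z(m := fst x, u := snd x) \<in> W}"
  have S: "open S"
    unfolding S_def using zW W D by (intro open_fun_upd_pair_preimage[OF Wo _ mu(1,2)]) auto
  have z_upd: "z(m := y m, u := g y) = z" and zmu: "z m = y m" "z u = g y"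
    unfolding z_def using mu by auto
  define F where "F x = p (z(m := fst x, u := snd x))" for x :: "real \<times> real"
  define G where "G x = q (z(m := fst x, u := snd x))" for x :: "real \<times> real"
  define \<phi> where "\<phi> s c = g (y(m := s, u := c))" for s c
  have x0: "(y m, g y) \<in> S"
    unfolding S_def using z_upd zW by simp
  have dF: "(F has_derivative
      (\<lambda>h. pd m p (z(m := s, u := t)) * fst h + pd u p (z(m := s, u := t)) * snd h)) (at (s, t))"
    if "(s, t) \<in> S" for s t
    using real_analytic_on_has_derivative_pair[OF p D _ mu, of "z(m := s, u := t)"] that W mu
    unfolding S_def F_def by auto
  have dG: "(G has_derivative (\<lambda>h. pd m q z * fst h + pd u q z * snd h)) (at (y m, g y))"
    using real_analytic_on_has_derivative_pair[OF q D _ mu, of z] zW W zmu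
    unfolding G_def by auto
  have nz0: "pd u p (z(m := y m, u := g y)) \<noteq> 0"
    using nz zW W z_upd by auto
  have \<phi>: "\<phi> s (F (s, t)) = t" if "(s, t) \<in> S" for s t
    using inv[of "z(m := s, u := t)"] that mu unfolding S_def z_def F_def \<phi>_def by (simp add: fun_upd_twist)
  have "((\<lambda>x. G (fst x, \<phi> (fst x) (snd x))) has_derivative
      (\<lambda>h. (pd m q z - pd u q z * pd m p z / pd u p z) * fst h + (pd u q z / pd u p z) * snd h))
      (at (y m, F (y m, g y)))"
    using has_derivative_compose_implicit[OF S x0 dF dG nz0 \<phi>] unfolding z_upd .
  moreover have "F (y m, g y) = y u"
    unfolding F_def using z_upd pz by simp
  moreover have "G (fst x, \<phi> (fst x) (snd x)) = q ((y(m := fst x, u := snd x))(u := g (y(m := fst x, u := snd x))))" for x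
    unfolding G_def \<phi>_def z_def using mu by (simp add: fun_upd_twist)
  ultimately show ?thesis
    by simp
qed

lemma level_chart_has_real_derivative:
  assumes chart: "level_chart N u p L g W" and W: "W \<subseteq> D"
    and p: "real_analytic_on N p D" and q: "real_analytic_on N q D" and D: "D \<subseteq> EucSp N"
    and nz: "\<forall>z\<in>D. pd u p z \<noteq> 0" and mu: "m < N" "u < N" "m \<noteq> u" and y: "y \<in> coord_box N L"
  defines "z \<equiv> y(u := g y)"
  shows "((\<lambda>s. q ((y(m := s))(u := g (y(m := s))))) has_real_derivative
           pd m q z - pd u q z * pd m p z / pd u p z) (at (y m))"
    and "((\<lambda>c. q ((y(u := c))(u := g (y(u := c))))) has_real_derivative pd u q z / pd u p z) (at (y u))"
  using has_derivative_pair_partials[OF level_chart_has_derivative[OF assms(1-10)]] mu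
  unfolding z_def by (simp_all add: fun_upd_idem)

section \<open>The total derivative operator and coordinate independence\<close>

lemma sum_fun_upd_shift:
  fixes z :: "nat \<Rightarrow> real"
  shows "(\<Sum>i<n. (z(m := t)) (i + d) * a i)
    = (\<Sum>i<n. z (i + d) * a i) + (if d \<le> m \<and> m < n + d then (t - z m) * a (m - d) else 0)"
  by (induction n) (auto simp: algebra_simps)

lemma Fop_fun_upd:
  assumes pd_eq: "\<forall>i<k + l. pd i f (z(m := t)) = pd i f z"
    and m: "(1 \<le> m \<and> m < k) \<or> (k + 2 \<le> m \<and> m \<le> k + l)"
  shows "Fop k l f (z(m := t)) = Fop k l f z + (t - z m) * pd (m - 1) f z"
proof -
  have "Fop k l f (z(m := t)) = (\<Sum>i<k - 1. (z(m := t)) (i + 1) * pd i f z)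
      + (\<Sum>j<l - 1. (z(m := t)) (j + (k + 2)) * pd (k + 1 + j) f z)"
    unfolding Fop_def using pd_eq by (intro arg_cong2[where f = "(+)"] sum.cong) (auto simp: add.commute)
  also have "\<dots> = Fop k l f z + (t - z m) * pd (m - 1) f z"
  proof -
    have "k + 2 \<le> m \<Longrightarrow> Suc (m - 2) = m - Suc 0"
      by arith
    then show ?thesis
      unfolding sum_fun_upd_shift Fop_def using m by (auto simp: add.commute)
  qed
  finally show ?thesis .
qed

lemma Fop_linear_combination:
  assumes pd_eq: "\<And>i. i < k + l \<Longrightarrow> i \<noteq> k - 1 \<Longrightarrow> i \<noteq> k \<Longrightarrow> pd i Q y = pd i q z - c * pd i p z"
    and coords: "\<And>n. n \<noteq> k - 1 \<Longrightarrow> y n = z n"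
    and low: "2 \<le> k \<Longrightarrow> pd (k - 2) q z - c * pd (k - 2) p z = 0"
  shows "Fop k l Q y = Fop k l q z - c * Fop k l p z"
proof -
  have termU: "y (i + 1) * pd i Q y = z (i + 1) * pd i q z - c * (z (i + 1) * pd i p z)" if "i < k - 1" for i
  proof (cases "i + 1 = k - 1")
    case True
    then have i: "i = k - 2" "2 \<le> k"
      by arith+
    then have "pd i q z = c * pd i p z" "pd i Q y = 0"
      using low pd_eq[of i] that by simp_all
    then show ?thesis
      by (simp add: algebra_simps)
  next
    case False
    have pdQ: "pd i Q y = pd i q z - c * pd i p z"
      using pd_eq[of i] that by simp
    show ?thesis
      unfolding pdQ coords[OF False] by (simp add: algebra_simps)
  qed
  have termV: "y (k + 2 + j) * pd (k + 1 + j) Q y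
      = z (k + 2 + j) * pd (k + 1 + j) q z - c * (z (k + 2 + j) * pd (k + 1 + j) p z)" if "j < l - 1" for j
  proof -
    have pdQ: "pd (k + 1 + j) Q y = pd (k + 1 + j) q z - c * pd (k + 1 + j) p z"
      using pd_eq[of "k + 1 + j"] that by simp
    have yz: "y (k + 2 + j) = z (k + 2 + j)"
      by (rule coords) simp
    show ?thesis
      unfolding pdQ yz by (simp add: algebra_simps)
  qed
  have "(\<Sum>i<k - 1. y (i + 1) * pd i Q y)
      = (\<Sum>i<k - 1. z (i + 1) * pd i q z - c * (z (i + 1) * pd i p z))"
    by (intro sum.cong refl termU) simp
  moreover have "(\<Sum>j<l - 1. y (k + 2 + j) * pd (k + 1 + j) Q y)
      = (\<Sum>j<l - 1. z (k + 2 + j) * pd (k + 1 + j) q z - c * (z (k + 2 + j) * pd (k + 1 + j) p z))"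
    by (intro sum.cong refl termV) simp
  ultimately show ?thesis
    unfolding Fop_def by (simp add: sum_subtractf sum_distrib_left algebra_simps)
qed

definition coord_indep :: "nat \<Rightarrow> (nat \<Rightarrow> real set) \<Rightarrow> ((nat \<Rightarrow> real) \<Rightarrow> real) \<Rightarrow> nat \<Rightarrow> bool" where
  "coord_indep N L Q m \<longleftrightarrow> (\<forall>y\<in>coord_box N L. \<forall>t\<in>L m. Q (y(m := t)) = Q y)"

lemma coord_indep_if_pd_zero:
  assumes L: "convex (L m)" and m: "m < N"
    and deriv: "\<And>y. y \<in> coord_box N L \<Longrightarrow> ((\<lambda>s. Q (y(m := s))) has_real_derivative pd m Q y) (at (y m))"
    and zero: "\<And>y. y \<in> coord_box N L \<Longrightarrow> pd m Q y = 0"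
  shows "coord_indep N L Q m"
  unfolding coord_indep_def
proof (intro ballI)
  fix y t
  assume y: "y \<in> coord_box N L" and t: "t \<in> L m"
  have "\<exists>c. \<forall>s\<in>L m. Q (y(m := s)) = c"
  proof (rule has_field_derivative_zero_constant[OF L])
    fix s
    assume "s \<in> L m"
    then have ys: "y(m := s) \<in> coord_box N L"
      by (rule coord_box_fun_upd[OF y m])
    show "((\<lambda>s. Q (y(m := s))) has_real_derivative 0) (at s within L m)"
      using deriv[OF ys] zero[OF ys] by (simp add: has_field_derivative_at_within)
  qed
  moreover have "y m \<in> L m"
    using y m unfolding coord_box_def by blast
  ultimately show "Q (y(m := t)) = Q y"
    using t by (metis fun_upd_triv)
qed

lemma coord_indep_pd_self:
  assumes indep: "coord_indep N L Q m" and L: "open (L m)" and y: "y \<in> coord_box N L" and m: "m < N"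
  shows "pd m Q y = 0"
proof -
  have "eventually (\<lambda>s. s \<in> L m) (nhds (y m))"
    using L y m unfolding coord_box_def by (intro eventually_nhds_in_open) auto
  then have "eventually (\<lambda>s. Q (y(m := s)) = Q y) (nhds (y m))"
    by (rule eventually_mono) (use indep y in \<open>simp add: coord_indep_def\<close>)
  then have "deriv (\<lambda>s. Q (y(m := s))) (y m) = deriv (\<lambda>s. Q y) (y m)"
    by (rule deriv_cong_ev) simp
  then show ?thesis
    unfolding pd_def by simp
qed

lemma coord_indep_pd_fun_upd:
  assumes indep: "coord_indep N L Q m" and L: "open (L j)" and y: "y \<in> coord_box N L"
    and t: "t \<in> L m" and j: "j < N" "j \<noteq> m"
  shows "pd j Q (y(m := t)) = pd j Q y"
proof -
  have "eventually (\<lambda>s. s \<in> L j) (nhds (y j))"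
    using L y j unfolding coord_box_def by (intro eventually_nhds_in_open) auto
  then have "eventually (\<lambda>s. Q ((y(m := t))(j := s)) = Q (y(j := s))) (nhds (y j))"
  proof (rule eventually_mono)
    fix s
    assume "s \<in> L j"
    then have "y(j := s) \<in> coord_box N L"
      by (rule coord_box_fun_upd[OF y j(1)])
    moreover have "(y(m := t))(j := s) = (y(j := s))(m := t)"
      using j(2) by (auto simp: fun_eq_iff)
    ultimately show "Q ((y(m := t))(j := s)) = Q (y(j := s))"
      using indep t unfolding coord_indep_def by simp
  qed
  then have "deriv (\<lambda>s. Q ((y(m := t))(j := s))) (y j) = deriv (\<lambda>s. Q (y(j := s))) (y j)"
    by (rule deriv_cong_ev) simp
  then show ?thesis
    unfolding pd_def using j(2) by simp
qed

text \<open>The coordinate \<open>m\<close> enters \<open>Fop k l Q\<close> only through the factor \<open>y m\<close> of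
  \<open>pd (m - 1) Q\<close>, and nowhere else in the equation; moving \<open>y m\<close> therefore forces
  \<open>pd (m - 1) Q = 0\<close>.\<close>
lemma coord_indep_descent:
  assumes eq: "\<forall>y\<in>coord_box N L. Fop k l Q y = \<Phi> (y k) (y (k - 1)) (Q y) (pd k Q y) (pd (k - 1) Q y)"
    and L: "\<forall>i. open (L i)" and indep: "coord_indep N L Q m"
    and m: "(1 \<le> m \<and> m < k - 1) \<or> (k + 2 \<le> m \<and> m \<le> k + l)" and N: "k + l < N"
    and y: "y \<in> coord_box N L"
  shows "pd (m - 1) Q y = 0"
proof -
  have mN: "m < N" "m \<noteq> k" "m \<noteq> k - 1"
    using m N by auto
  have "y m \<in> L m"
    using y mN unfolding coord_box_def by blast
  then obtain e where e: "0 < e" "ball (y m) e \<subseteq> L m"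
    using L open_contains_ball by blast
  define t where "t = y m + e / 2"
  have t: "t \<in> L m" "t \<noteq> y m"
    using e unfolding t_def by (auto simp: dist_real_def)
  define y' where "y' = y(m := t)"
  have y': "y' \<in> coord_box N L"
    unfolding y'_def by (rule coord_box_fun_upd[OF y mN(1) t(1)])
  have pd_eq: "pd i Q y' = pd i Q y" if "i < N" for i
  proof (cases "i = m")
    case True
    then show ?thesis
      using coord_indep_pd_self[OF indep _ y' mN(1)] coord_indep_pd_self[OF indep _ y mN(1)] L by simp
  next
    case False
    then show ?thesis
      unfolding y'_def using L by (intro coord_indep_pd_fun_upd[OF indep _ y t(1) that]) auto
  qed
  have "Q y' = Q y"
    using indep y t(1) unfolding coord_indep_def y'_def by blast
  then have "Fop k l Q y' = Fop k l Q y"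
    using eq y y' pd_eq[of k] pd_eq[of "k - 1"] mN N unfolding y'_def by simp
  moreover have "Fop k l Q y' = Fop k l Q y + (t - y m) * pd (m - 1) Q y"
    using m N pd_eq unfolding y'_def by (intro Fop_fun_upd) auto
  ultimately show ?thesis
    using t(2) by simp
qed

lemma Fop_equation_coord_indep:
  assumes eq: "\<forall>y\<in>coord_box N L. Fop k l Q y = \<Phi> (y k) (y (k - 1)) (Q y) (pd k Q y) (pd (k - 1) Q y)"
    and L: "\<forall>i. open (L i) \<and> convex (L i)" and N: "N = k + l + 1"
    and deriv: "\<And>m y. m < N \<Longrightarrow> m \<noteq> k - 1 \<Longrightarrow> y \<in> coord_box N L \<Longrightarrow>
                  ((\<lambda>s. Q (y(m := s))) has_real_derivative pd m Q y) (at (y m))"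
    and top: "\<And>y. y \<in> coord_box N L \<Longrightarrow> pd (k + l) Q y = 0"
    and low: "\<And>y. 2 \<le> k \<Longrightarrow> y \<in> coord_box N L \<Longrightarrow> pd (k - 2) Q y = 0"
    and m: "m < N" "m \<noteq> k - 1" "m \<noteq> k"
  shows "coord_indep N L Q m"
proof -
  have of_zero: "coord_indep N L Q n"
    if n: "n < N" "n \<noteq> k - 1" and zero: "\<And>y. y \<in> coord_box N L \<Longrightarrow> pd n Q y = 0" for n
  proof (rule coord_indep_if_pd_zero[OF _ n(1)])
    show "convex (L n)"
      using L by blast
  qed (use deriv[OF n] zero in auto)
  have descend: "coord_indep N L Q n" if "coord_indep N L Q (Suc n)"
    "(1 \<le> Suc n \<and> Suc n < k - 1) \<or> (k + 2 \<le> Suc n \<and> Suc n \<le> k + l)" for n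
    using that coord_indep_descent[OF eq _ that(1) that(2), of y for y] L N
    by (intro of_zero) (auto simp: N)
  have low_chain: "coord_indep N L Q n" if "n \<le> k - 2" "2 \<le> k" for n
    using that(1)
  proof (induction n rule: inc_induct)
    case base
    show ?case
      using low that(2) N by (intro of_zero) auto
  next
    case (step n)
    then have "Suc n < k - 1"
      by arith
    then show ?case
      using descend[OF step(3)] by simp
  qed
  have high_chain: "coord_indep N L Q n" if "n \<le> k + l" "k + 1 \<le> n" for n
    using that(1)
  proof (induction n rule: inc_induct)
    case base
    show ?case
      using top N that by (intro of_zero) auto
  next
    case (step n')
    with that(2) have "k + 2 \<le> Suc n' \<and> Suc n' \<le> k + l"
      by arith
    then show ?case
      using descend[OF step(3)] by simp
  qed
  show ?thesis
    using low_chain high_chain m N by (cases "m < k") auto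
qed

lemma coord_indep_reduce:
  assumes indep: "\<And>m. m < N \<Longrightarrow> m \<notin> J \<Longrightarrow> coord_indep N L Q m"
    and y: "y \<in> coord_box N L" and y0: "y0 \<in> coord_box N L"
  shows "Q y = Q (\<lambda>i. if i \<in> J then y i else y0 i)"
proof -
  define ys where "ys n = (\<lambda>i. if i < n \<and> i \<notin> J then y0 i else y i)" for n
  have ys: "ys n \<in> coord_box N L \<and> Q (ys n) = Q y" if "n \<le> N" for n
    using that
  proof (induction n)
    case 0
    then show ?case
      using y unfolding ys_def by simp
  next
    case (Suc n)
    show ?case
    proof (cases "n \<in> J")
      case True
      then have "ys (Suc n) = ys n"
        unfolding ys_def by (auto simp: fun_eq_iff less_Suc_eq)
      then show ?thesis
        using Suc by simp
    next
      case False
      then have "ys (Suc n) = (ys n)(n := y0 n)"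
        unfolding ys_def by (auto simp: fun_eq_iff less_Suc_eq)
      moreover have "n < N" "y0 n \<in> L n"
        using y0 Suc.prems unfolding coord_box_def by auto
      moreover have "ys n \<in> coord_box N L" "Q (ys n) = Q y"
        using Suc by auto
      ultimately show ?thesis
        using coord_box_fun_upd indep[OF \<open>n < N\<close> False] unfolding coord_indep_def by metis
    qed
  qed
  moreover have "ys N = (\<lambda>i. if i \<in> J then y i else y0 i)"
    using y y0 unfolding ys_def coord_box_def EucSp_def by (auto simp: fun_eq_iff)
  ultimately show ?thesis
    using ys[of N] by simp
qed

section \<open>Solutions in a level chart\<close>

locale solution_level_chart =
  fixes k l :: nat and \<gamma> \<delta> p :: "(nat \<Rightarrow> real) \<Rightarrow> real" and D W :: "(nat \<Rightarrow> real) set"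
    and L :: "nat \<Rightarrow> real set" and g :: "(nat \<Rightarrow> real) \<Rightarrow> real"
  assumes k: "1 \<le> k"
    and D: "D \<subseteq> EucSp (k + l + 1)" and W: "W \<subseteq> D"
    and p: "real_analytic_on (k + l + 1) p D"
    and eq_a: "\<And>z. z \<in> D \<Longrightarrow>
      pd (k - 1) p z * (Fop k l (pd k p) z - \<delta> (mk4 (z k) (p z) (pd k p z) (pd k (pd k p) z)))
      - pd (k - 1) (pd k p) z * (Fop k l p z - \<gamma> (mk4 (z k) (p z) (pd k p z) (pd k (pd k p) z))) = 0"
    and eq_b: "\<And>z. z \<in> D \<Longrightarrow> pd (k - 1) p z * pd (k + l) (pd k p) z - pd (k - 1) (pd k p) z * pd (k + l) p z = 0"
    and nz: "\<And>z. z \<in> D \<Longrightarrow> pd (k - 1) p z \<noteq> 0"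
    and hyp: "k = 1 \<or> (\<forall>z\<in>D. pd (k - 1) p z * pd (k - 2) (pd k p) z - pd (k - 2) p z * pd (k - 1) (pd k p) z = 0)"
    and chart: "level_chart (k + l + 1) (k - 1) p L g W"
begin

definition Q :: "(nat \<Rightarrow> real) \<Rightarrow> real" where
  "Q y = pd k p (y(k - 1 := g y))"

lemma pd_Q:
  assumes y: "y \<in> coord_box (k + l + 1) L" and m: "m < k + l + 1"
  defines "z \<equiv> y(k - 1 := g y)"
  shows "((\<lambda>s. Q (y(m := s))) has_real_derivative pd m Q y) (at (y m))"
    and "pd m Q y = (if m = k - 1 then pd (k - 1) (pd k p) z / pd (k - 1) p z
          else pd m (pd k p) z - pd (k - 1) (pd k p) z / pd (k - 1) p z * pd m p z)"
proof -
  have q: "real_analytic_on (k + l + 1) (pd k p) D"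
    using real_analytic_on_pd[OF p D] by simp
  have nz': "\<forall>z\<in>D. pd (k - 1) p z \<noteq> 0"
    using nz by blast
  have "((\<lambda>s. Q (y(m := s))) has_real_derivative (if m = k - 1 then pd (k - 1) (pd k p) z / pd (k - 1) p z
          else pd m (pd k p) z - pd (k - 1) (pd k p) z / pd (k - 1) p z * pd m p z)) (at (y m))"
  proof (cases "m = k - 1")
    case True
    then show ?thesis
      using level_chart_has_real_derivative(2)[OF chart W p q D nz' _ _ _ y, of k] k
      unfolding Q_def z_def by simp
  next
    case False
    then show ?thesis
      using level_chart_has_real_derivative(1)[OF chart W p q D nz' m _ False y] k
      unfolding Q_def z_def by simp
  qed
  moreover from this have "pd m Q y = (if m = k - 1 then pd (k - 1) (pd k p) z / pd (k - 1) p z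
          else pd m (pd k p) z - pd (k - 1) (pd k p) z / pd (k - 1) p z * pd m p z)"
    unfolding pd_def by (rule DERIV_imp_deriv)
  ultimately show "((\<lambda>s. Q (y(m := s))) has_real_derivative pd m Q y) (at (y m))"
    "pd m Q y = (if m = k - 1 then pd (k - 1) (pd k p) z / pd (k - 1) p z
          else pd m (pd k p) z - pd (k - 1) (pd k p) z / pd (k - 1) p z * pd m p z)"
    by simp_all
qed

lemma index_facts: "k - 1 \<noteq> k" "k + l \<noteq> k - 1" "k - 1 < k + l + 1" "k < k + l + 1"
  using k by auto

lemma chart_point:
  assumes "y \<in> coord_box (k + l + 1) L"
  shows "y(k - 1 := g y) \<in> D" "p (y(k - 1 := g y)) = y (k - 1)"
  using chart assms W unfolding level_chart_def by auto

text \<open>In the chart, equation (a) of the system becomes an equation for \<open>Q\<close> alone, in which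
  the coordinates other than \<open>x\<close> and the level \<open>y (k - 1)\<close> occur only through \<open>Fop k l Q\<close>.\<close>
lemma Q_equation:
  assumes y: "y \<in> coord_box (k + l + 1) L"
  defines "w \<equiv> mk4 (y k) (y (k - 1)) (Q y) (pd k Q y + pd (k - 1) Q y * Q y)"
  shows "Fop k l Q y = \<delta> w - pd (k - 1) Q y * \<gamma> w"
proof -
  define z where "z = y(k - 1 := g y)"
  define c where "c = pd (k - 1) (pd k p) z / pd (k - 1) p z"
  have zD: "z \<in> D" and pz: "p z = y (k - 1)"
    using chart_point[OF y] unfolding z_def by auto
  have P: "pd (k - 1) p z \<noteq> 0"
    by (rule nz[OF zD])
  have pdQ: "pd i Q y = pd i (pd k p) z - c * pd i p z" if "i < k + l + 1" "i \<noteq> k - 1" for i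
    using pd_Q(2)[OF y that(1)] that(2) unfolding c_def z_def by simp
  have pdQu: "pd (k - 1) Q y = c"
    using pd_Q(2)[OF y, of "k - 1"] k unfolding c_def z_def by simp
  have "Fop k l Q y = Fop k l (pd k p) z - c * Fop k l p z"
  proof (rule Fop_linear_combination)
    show "y n = z n" if "n \<noteq> k - 1" for n
      using that unfolding z_def by simp
    show "pd (k - 2) (pd k p) z - c * pd (k - 2) p z = 0" if "2 \<le> k"
      using hyp that zD P unfolding c_def by (auto simp: field_simps)
  qed (use pdQ in simp)
  moreover have "w = mk4 (z k) (p z) (pd k p z) (pd k (pd k p) z)"
  proof -
    have "Q y = pd k p z" "y k = z k"
      unfolding Q_def z_def using index_facts by simp_all
    moreover have "pd k Q y + pd (k - 1) Q y * Q y = pd k (pd k p) z"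
      using pdQ[of k] pdQu index_facts \<open>Q y = pd k p z\<close> by simp
    ultimately show ?thesis
      unfolding w_def pz by simp
  qed
  moreover have "pd (k - 1) p z * (Fop k l (pd k p) z - \<delta> w) - pd (k - 1) (pd k p) z * (Fop k l p z - \<gamma> w) = 0"
    using eq_a[OF zD] calculation(2) by simp
  ultimately show ?thesis
    using P unfolding pdQu c_def by (simp add: field_simps)
qed

lemma pd_Q_top:
  assumes y: "y \<in> coord_box (k + l + 1) L"
  shows "pd (k + l) Q y = 0"
  using pd_Q(2)[OF y, of "k + l"] eq_b[OF chart_point(1)[OF y]] nz[OF chart_point(1)[OF y]] index_facts
  by (simp add: field_simps)

lemma pd_Q_low:
  assumes y: "y \<in> coord_box (k + l + 1) L" and "2 \<le> k"
  shows "pd (k - 2) Q y = 0"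
  using pd_Q(2)[OF y, of "k - 2"] hyp nz[OF chart_point(1)[OF y]] chart_point(1)[OF y] assms(2)
  by (auto simp: field_simps)

lemma Q_coord_indep:
  assumes m: "m < k + l + 1" "m \<noteq> k - 1" "m \<noteq> k"
  shows "coord_indep (k + l + 1) L Q m"
proof (rule Fop_equation_coord_indep[OF _ _ refl _ pd_Q_top pd_Q_low m])
  show "\<forall>y\<in>coord_box (k + l + 1) L. Fop k l Q y =
    (\<lambda>x c v d e. \<delta> (mk4 x c v (d + e * v)) - e * \<gamma> (mk4 x c v (d + e * v)))
      (y k) (y (k - 1)) (Q y) (pd k Q y) (pd (k - 1) Q y)"
    using Q_equation by simp
  show "\<forall>i. open (L i) \<and> convex (L i)"
    using chart by (simp add: level_chart_def)
qed (use pd_Q(1) in auto)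

lemma pd_eq_graph: "\<exists>\<alpha>. \<forall>w\<in>W. pd k p w = \<alpha> (w k) (p w)"
proof (cases "W = {}")
  case False
  then obtain w0 where "w0 \<in> W"
    by blast
  define y0 where "y0 = w0(k - 1 := p w0)"
  have y0: "y0 \<in> coord_box (k + l + 1) L"
    using chart \<open>w0 \<in> W\<close> unfolding level_chart_def y0_def by blast
  show ?thesis
  proof (intro exI ballI)
    fix w
    assume "w \<in> W"
    define y where "y = w(k - 1 := p w)"
    have y: "y \<in> coord_box (k + l + 1) L" and "g y = w (k - 1)"
      using chart \<open>w \<in> W\<close> unfolding level_chart_def y_def by auto
    then have "pd k p w = Q y"
      unfolding Q_def y_def by simp
    also have "\<dots> = Q (\<lambda>i. if i \<in> {k, k - 1} then y i else y0 i)"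
      by (rule coord_indep_reduce[OF Q_coord_indep y y0]) auto
    also have "\<dots> = Q (y0(k := w k, k - 1 := p w))"
      using index_facts unfolding y_def by (intro arg_cong[where f = Q]) auto
    finally show "pd k p w = Q (y0(k := w k, k - 1 := p w))" .
  qed
qed simp

end

theorem lemma3p10:
  fixes k l :: nat
    and \<gamma> \<delta> :: "(nat \<Rightarrow> real) \<Rightarrow> real"
    and \<Omega> :: "(nat \<Rightarrow> real) set"
    and p :: "(nat \<Rightarrow> real) \<Rightarrow> real"
    and D :: "(nat \<Rightarrow> real) set"
  assumes "k \<ge> 1" and "l \<ge> 1"
    and "\<Omega> \<subseteq> EucSp 4" and "openin (top_of_set (EucSp 4)) \<Omega>" and "connected \<Omega>"
    and "real_analytic_on 4 \<gamma> \<Omega>" and "real_analytic_on 4 \<delta> \<Omega>"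
    and "\<forall>w\<in>\<Omega>. pd 3 \<gamma> w \<noteq> 0"
    and "D \<subseteq> EucSp (k + l + 1)" and "openin (top_of_set (EucSp (k + l + 1))) D"
    and "connected D"
    and "is_solution k l \<gamma> \<delta> \<Omega> p D"
    and "k = 1 \<or> (\<forall>z\<in>D. pd (k - 1) p z * pd (k - 2) (pd k p) z
                          - pd (k - 2) p z * pd (k - 1) (pd k p) z = 0)"
  shows "\<forall>z0\<in>D. pd (k - 1) p z0 \<noteq> 0 \<longrightarrow>
           (\<exists>W. openin (top_of_set (EucSp (k + l + 1))) W \<and> z0 \<in> W \<and> W \<subseteq> D \<and>
              (\<exists>\<alpha> :: real \<Rightarrow> real \<Rightarrow> real. \<forall>z\<in>W. pd k p z = \<alpha> (z k) (p z)))"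
proof (intro ballI impI)
  fix z0
  assume z0: "z0 \<in> D"
  have p: "real_analytic_on (k + l + 1) p D"
    using assms(12) unfolding is_solution_def by blast
  have sol: "pd (k - 1) p z * (Fop k l (pd k p) z - \<delta> (mk4 (z k) (p z) (pd k p z) (pd k (pd k p) z)))
        - pd (k - 1) (pd k p) z * (Fop k l p z - \<gamma> (mk4 (z k) (p z) (pd k p z) (pd k (pd k p) z))) = 0"
      "pd (k - 1) p z * pd (k + l) (pd k p) z - pd (k - 1) (pd k p) z * pd (k + l) p z = 0"
      "pd (k - 1) p z \<noteq> 0"
    if "z \<in> D" for z
    using assms(12) that unfolding is_solution_def Let_def by auto
  have "k - 1 < k + l + 1" "\<forall>z\<in>D. pd (k - 1) p z \<noteq> 0"
    using sol(3) by simp_all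
  then obtain L g W where LgW: "level_chart (k + l + 1) (k - 1) p L g W" "z0 \<in> W" "W \<subseteq> D"
    by (rule exists_level_chart[OF p assms(9,10) _ _ z0])
  interpret solution_level_chart k l \<gamma> \<delta> p D W L g
    by (rule solution_level_chart.intro[OF assms(1,9) LgW(3) p sol _ LgW(1)]) (use assms(13) in simp_all)
  have "openin (top_of_set (EucSp (k + l + 1))) W"
    using LgW(1) unfolding level_chart_def by blast
  then show "\<exists>W. openin (top_of_set (EucSp (k + l + 1))) W \<and> z0 \<in> W \<and> W \<subseteq> D \<and>
      (\<exists>\<alpha> :: real \<Rightarrow> real \<Rightarrow> real. \<forall>z\<in>W. pd k p z = \<alpha> (z k) (p z))"
    using LgW(2,3) pd_eq_graph by blast
qed

end
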